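(* Let $S$ and $T$ be operator systems. If $S$ and $T$ are dualizable, then the operator system coproduct $S\oplus T$ is dualizable.
   Context: Operator systems here are (possibly nonunital) matrix ordered operator spaces admitting a completely isometric complete order embedding into some $B(H)$. The nc quasistate space $\mathcal{QS}(S)=\coprod_n\mathcal{QS}_n(S)$ has $\mathcal{QS}_n(S)$ the completely contractive completely positive maps $S\to M_n$. The coproduct $S\oplus T$ is the vector space $S\oplus T$ with $M_n(S\oplus T)=M_n(S)\oplus M_n(T)$, matrix norms $\|(x,y)\|_{M_n(S\oplus T)}=\sup\{\|\phi_n(x)+\psi_n(y)\|: m\ge1,\ \phi\in\mathcal{QS}_m(S),\ \psi\in\mathcal{QS}_m(T)\}$ and cones $M_n(S\oplus T)^+=M_n(S)^+\oplus M_n(T)^+$ (equivalently, the operator system of continuous affine nc functions on $\mathcal{QS}(S)\times\mathcal{QS}(T)$ vanishing at $(0,0)$). For an operator system $S$, $S^*$ has $M_n(S^* )\cong\mathrm{CB}(S,M_n)$ with cb norm and $M_n(S^* )^+=\mathrm{CP}(S,M_n)$; $S$ is dualizable if there is a linear map $S^*\to B(H)$ that is completely bounded, completely bounded below and a complete order isomorphism onto its range. *)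

theory Defs
  imports "HOL-Analysis.Analysis"
begin

definition l2 :: "('i \<Rightarrow> complex) set" where
  "l2 = {x. (\<lambda>i. (cmod (x i))^2) summable_on UNIV}"

definition l2inner :: "('i \<Rightarrow> complex) \<Rightarrow> ('i \<Rightarrow> complex) \<Rightarrow> complex" where
  "l2inner x y = (\<Sum>\<^sub>\<infinity>i. x i * cnj (y i))"

definition l2norm :: "('i \<Rightarrow> complex) \<Rightarrow> real" where
  "l2norm x = sqrt (\<Sum>\<^sub>\<infinity>i. (cmod (x i))^2)"

text \<open>Bounded operators on l2(I); normalised to be 0 off l2 so that each operator
  has a unique representative.\<close>
definition bop :: "(('i \<Rightarrow> complex) \<Rightarrow> ('i \<Rightarrow> complex)) set" where
  "bop = {T. (\<forall>x\<in>l2. T x \<in> l2)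
        \<and> (\<forall>x\<in>l2. \<forall>y\<in>l2. T (\<lambda>i. x i + y i) = (\<lambda>i. T x i + T y i))
        \<and> (\<forall>c. \<forall>x\<in>l2. T (\<lambda>i. c * x i) = (\<lambda>i. c * T x i))
        \<and> (\<exists>K. \<forall>x\<in>l2. l2norm (T x) \<le> K * l2norm x)
        \<and> (\<forall>x. x \<notin> l2 \<longrightarrow> T x = (\<lambda>i. 0))}"

text \<open>M_n(B(H)) acting on H^n (n-tuples of vectors).\<close>
definition tup_l2 :: "nat \<Rightarrow> (nat \<Rightarrow> 'i \<Rightarrow> complex) set" where
  "tup_l2 n = {u. \<forall>k<n. u k \<in> l2}"

definition tapply :: "nat \<Rightarrow> (nat \<Rightarrow> nat \<Rightarrow> ('i \<Rightarrow> complex) \<Rightarrow> ('i \<Rightarrow> complex))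
    \<Rightarrow> (nat \<Rightarrow> 'i \<Rightarrow> complex) \<Rightarrow> (nat \<Rightarrow> 'i \<Rightarrow> complex)" where
  "tapply n T u = (\<lambda>k i. \<Sum>m<n. T k m (u m) i)"

definition tnorm :: "nat \<Rightarrow> (nat \<Rightarrow> 'i \<Rightarrow> complex) \<Rightarrow> real" where
  "tnorm n u = sqrt (\<Sum>k<n. (l2norm (u k))^2)"

definition tinner :: "nat \<Rightarrow> (nat \<Rightarrow> 'i \<Rightarrow> complex) \<Rightarrow> (nat \<Rightarrow> 'i \<Rightarrow> complex) \<Rightarrow> complex" where
  "tinner n u w = (\<Sum>k<n. l2inner (u k) (w k))"

definition bop_mnorm :: "nat \<Rightarrow> (nat \<Rightarrow> nat \<Rightarrow> ('i \<Rightarrow> complex) \<Rightarrow> ('i \<Rightarrow> complex)) \<Rightarrow> real" where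
  "bop_mnorm n T = (SUP u\<in>{u\<in>tup_l2 n. tnorm n u \<le> 1}. tnorm n (tapply n T u))"

definition bop_mpos :: "nat \<Rightarrow> (nat \<Rightarrow> nat \<Rightarrow> ('i \<Rightarrow> complex) \<Rightarrow> ('i \<Rightarrow> complex)) \<Rightarrow> bool" where
  "bop_mpos n T = (\<forall>u\<in>tup_l2 n. Im (tinner n (tapply n T u) u) = 0 \<and> 0 \<le> Re (tinner n (tapply n T u) u))"

definition cvnorm :: "nat \<Rightarrow> (nat \<Rightarrow> complex) \<Rightarrow> real" where
  "cvnorm n v = sqrt (\<Sum>k<n. (cmod (v k))^2)"

definition cmapply :: "nat \<Rightarrow> (nat \<Rightarrow> nat \<Rightarrow> complex) \<Rightarrow> (nat \<Rightarrow> complex) \<Rightarrow> (nat \<Rightarrow> complex)" where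
  "cmapply n A v = (\<lambda>k. \<Sum>m<n. A k m * v m)"

definition cmnorm :: "nat \<Rightarrow> (nat \<Rightarrow> nat \<Rightarrow> complex) \<Rightarrow> real" where
  "cmnorm n A = (SUP v\<in>{v. cvnorm n v \<le> 1}. cvnorm n (cmapply n A v))"

definition cmpos :: "nat \<Rightarrow> (nat \<Rightarrow> nat \<Rightarrow> complex) \<Rightarrow> bool" where
  "cmpos n A = (\<forall>v. Im (\<Sum>k<n. cnj (v k) * cmapply n A v k) = 0
                  \<and> 0 \<le> Re (\<Sum>k<n. cnj (v k) * cmapply n A v k))"

text \<open>A complex vector space structure on the type 'v (addition from the type class,
  complex scalar multiplication explicit), an involution, matrix norms on M_n('v) and
  matrix cones M_n('v)^+.  An n x n matrix is a function nat => nat => 'v (entries < n used).\<close>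
record 'v mstruct =
  msc   :: "complex \<Rightarrow> 'v \<Rightarrow> 'v"
  minv  :: "'v \<Rightarrow> 'v"
  mnorm :: "nat \<Rightarrow> (nat \<Rightarrow> nat \<Rightarrow> 'v) \<Rightarrow> real"
  mpos  :: "nat \<Rightarrow> (nat \<Rightarrow> nat \<Rightarrow> 'v) set"

definition operator_system :: "'i itself \<Rightarrow> ('v::ab_group_add) mstruct \<Rightarrow> bool" where
  "operator_system _ S \<longleftrightarrow> (\<exists>j :: 'v \<Rightarrow> (('i \<Rightarrow> complex) \<Rightarrow> ('i \<Rightarrow> complex)).
      (\<forall>x. j x \<in> bop) \<and> inj j
    \<and> (\<forall>x y. j (x + y) = (\<lambda>u i. j x u i + j y u i))
    \<and> (\<forall>c x. j (msc S c x) = (\<lambda>u i. c * j x u i))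
    \<and> (\<forall>x. \<forall>u\<in>l2. \<forall>w\<in>l2. l2inner (j x u) w = l2inner u (j (minv S x) w))
    \<and> (\<forall>n\<ge>1. \<forall>X. mnorm S n X = bop_mnorm n (\<lambda>a b. j (X a b)))
    \<and> (\<forall>n\<ge>1. \<forall>X. X \<in> mpos S n \<longleftrightarrow> bop_mpos n (\<lambda>a b. j (X a b))))"

text \<open>Amplification: for phi : V -> M_m and X in M_n(V), phi_n(X) in M_{nm}
  (index p = block * m + entry).\<close>
definition amp :: "nat \<Rightarrow> ('v \<Rightarrow> nat \<Rightarrow> nat \<Rightarrow> complex) \<Rightarrow> (nat \<Rightarrow> nat \<Rightarrow> 'v) \<Rightarrow> (nat \<Rightarrow> nat \<Rightarrow> complex)" where
  "amp m \<phi> X = (\<lambda>p q. \<phi> (X (p div m) (q div m)) (p mod m) (q mod m))"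

definition clin_mat :: "('v::ab_group_add) mstruct \<Rightarrow> ('v \<Rightarrow> nat \<Rightarrow> nat \<Rightarrow> complex) \<Rightarrow> bool" where
  "clin_mat S \<phi> \<longleftrightarrow> (\<forall>x y a b. \<phi> (x + y) a b = \<phi> x a b + \<phi> y a b)
                    \<and> (\<forall>c x a b. \<phi> (msc S c x) a b = c * \<phi> x a b)"

definition QS :: "('v::ab_group_add) mstruct \<Rightarrow> nat \<Rightarrow> ('v \<Rightarrow> nat \<Rightarrow> nat \<Rightarrow> complex) set" where
  "QS S m = {\<phi>. clin_mat S \<phi>
      \<and> (\<forall>n\<ge>1. \<forall>X. cmnorm (n * m) (amp m \<phi> X) \<le> mnorm S n X)
      \<and> (\<forall>n\<ge>1. \<forall>X\<in>mpos S n. cmpos (n * m) (amp m \<phi> X))}"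

definition coprod :: "('a::ab_group_add) mstruct \<Rightarrow> ('b::ab_group_add) mstruct \<Rightarrow> ('a \<times> 'b) mstruct" where
  "coprod S T = \<lparr> msc = (\<lambda>c xy. (msc S c (fst xy), msc T c (snd xy))),
     minv = (\<lambda>xy. (minv S (fst xy), minv T (snd xy))),
     mnorm = (\<lambda>n X. SUP t\<in>{(m, \<phi>, \<psi>). m \<ge> 1 \<and> \<phi> \<in> QS S m \<and> \<psi> \<in> QS T m}.
        (case t of (m, \<phi>, \<psi>) \<Rightarrow>
           cmnorm (n * m) (\<lambda>p q. amp m \<phi> (\<lambda>a b. fst (X a b)) p q
                               + amp m \<psi> (\<lambda>a b. snd (X a b)) p q))),
     mpos = (\<lambda>n. {X. (\<lambda>a b. fst (X a b)) \<in> mpos S n \<and> (\<lambda>a b. snd (X a b)) \<in> mpos T n}) \<rparr>"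

definition clinfun :: "('v::ab_group_add) mstruct \<Rightarrow> ('v \<Rightarrow> complex) \<Rightarrow> bool" where
  "clinfun S f \<longleftrightarrow> (\<forall>x y. f (x + y) = f x + f y) \<and> (\<forall>c x. f (msc S c x) = c * f x)"

text \<open>F in M_n(S^*) corresponds to the map x |-> [F a b x] : S -> M_n.\<close>
definition dual_vals :: "('v::ab_group_add) mstruct \<Rightarrow> nat \<Rightarrow> (nat \<Rightarrow> nat \<Rightarrow> 'v \<Rightarrow> complex) \<Rightarrow> real set" where
  "dual_vals S n F = {cmnorm (m * n) (amp n (\<lambda>x a b. F a b x) X) | m X. m \<ge> 1 \<and> mnorm S m X \<le> 1}"

definition dual_mat :: "('v::ab_group_add) mstruct \<Rightarrow> nat \<Rightarrow> (nat \<Rightarrow> nat \<Rightarrow> 'v \<Rightarrow> complex) \<Rightarrow> bool" where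
  "dual_mat S n F \<longleftrightarrow> (\<forall>a<n. \<forall>b<n. clinfun S (F a b)) \<and> bdd_above (dual_vals S n F)"

definition dual_mnorm :: "('v::ab_group_add) mstruct \<Rightarrow> nat \<Rightarrow> (nat \<Rightarrow> nat \<Rightarrow> 'v \<Rightarrow> complex) \<Rightarrow> real" where
  "dual_mnorm S n F = Sup (dual_vals S n F)"

definition dual_mpos :: "('v::ab_group_add) mstruct \<Rightarrow> nat \<Rightarrow> (nat \<Rightarrow> nat \<Rightarrow> 'v \<Rightarrow> complex) \<Rightarrow> bool" where
  "dual_mpos S n F \<longleftrightarrow> (\<forall>m\<ge>1. \<forall>X\<in>mpos S m. cmpos (m * n) (amp n (\<lambda>x a b. F a b x) X))"

definition dualizable :: "'h itself \<Rightarrow> ('v::ab_group_add) mstruct \<Rightarrow> bool" where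
  "dualizable _ S \<longleftrightarrow> (\<exists>\<Phi> :: ('v \<Rightarrow> complex) \<Rightarrow> (('h \<Rightarrow> complex) \<Rightarrow> ('h \<Rightarrow> complex)).
      (\<forall>f. dual_mat S 1 (\<lambda>_ _. f) \<longrightarrow> \<Phi> f \<in> bop)
    \<and> (\<forall>f g. dual_mat S 1 (\<lambda>_ _. f) \<and> dual_mat S 1 (\<lambda>_ _. g)
          \<longrightarrow> \<Phi> (\<lambda>x. f x + g x) = (\<lambda>u i. \<Phi> f u i + \<Phi> g u i))
    \<and> (\<forall>c f. dual_mat S 1 (\<lambda>_ _. f) \<longrightarrow> \<Phi> (\<lambda>x. c * f x) = (\<lambda>u i. c * \<Phi> f u i))
    \<and> (\<exists>K. \<forall>n\<ge>1. \<forall>F. dual_mat S n F \<longrightarrow>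
          bop_mnorm n (\<lambda>a b. \<Phi> (F a b)) \<le> K * dual_mnorm S n F)
    \<and> (\<exists>c>0. \<forall>n\<ge>1. \<forall>F. dual_mat S n F \<longrightarrow>
          c * dual_mnorm S n F \<le> bop_mnorm n (\<lambda>a b. \<Phi> (F a b)))
    \<and> (\<forall>n\<ge>1. \<forall>F. dual_mat S n F \<longrightarrow>
          (dual_mpos S n F \<longleftrightarrow> bop_mpos n (\<lambda>a b. \<Phi> (F a b)))))"

end

(* Let Phi_S and Phi_T realise S^* and T^* inside B(H) and B(K).  A functional f on the
   coproduct splits as f(x, y) = f(x, 0) + f(0, y), and f is sent to the block diagonal operator
   Phi_S (f(-, 0)) (+) Phi_T (f(0, -)) on H (+) K; at matrix level the same is done entrywise.
   A block diagonal operator matrix has norm between the norms of its two blocks and their sum,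
   and it is positive iff both blocks are.  On the dual side, the restrictions F_S, F_T of
   F in M_n of the dual of S (+) T satisfy ||F_S||, ||F_T|| <= ||F|| <= ||F_S|| + ||F_T||, and F is
   completely positive iff F_S and F_T are.  The only non-formal input is the inequality
   ||X_S|| <= ||X|| for X in M_n(S (+) T): the norm of M_n(S) is attained on nc quasistates,
   because every operator matrix is normed by its compressions to finitely many basis vectors
   of l2, and these compressions are completely contractive completely positive maps. *)
theory Submission
  imports Defs
begin

lemma l2norm_sq: "(l2norm x)^2 = (\<Sum>\<^sub>\<infinity>i. (cmod (x i))^2)"
  unfolding l2norm_def by (simp add: infsum_nonneg)

lemma l2norm_nonneg: "0 \<le> l2norm x"
  unfolding l2norm_def by (simp add: infsum_nonneg)

lemma l2_finite_sum_le:
  assumes "x \<in> l2" "finite F"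
  shows "(\<Sum>i\<in>F. (cmod (x i))^2) \<le> (l2norm x)^2"
proof -
  have "(\<Sum>i\<in>F. (cmod (x i))^2) = (\<Sum>\<^sub>\<infinity>i\<in>F. (cmod (x i))^2)" using assms by simp
  also have "\<dots> \<le> (\<Sum>\<^sub>\<infinity>i. (cmod (x i))^2)"
    by (rule infsum_mono_neutral) (use assms in \<open>auto simp: l2_def\<close>)
  finally show ?thesis by (simp add: l2norm_sq)
qed

lemma l2I_finite_sums_bounded:
  assumes bound: "\<And>F. finite F \<Longrightarrow> (\<Sum>i\<in>F. (cmod (x i))^2) \<le> B^2" and "0 \<le> B"
  shows "x \<in> l2" "l2norm x \<le> B"
proof -
  have summable: "(\<lambda>i. (cmod (x i))^2) summable_on UNIV"
    by (rule nonneg_bdd_above_summable_on) (auto intro!: bdd_aboveI[where M="B^2"] bound)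
  then show "x \<in> l2" unfolding l2_def by simp
  have "(\<Sum>\<^sub>\<infinity>i. (cmod (x i))^2) \<le> B^2"
    by (rule infsum_le_finite_sums[OF summable]) (rule bound)
  then show "l2norm x \<le> B"
    unfolding l2norm_def using \<open>0 \<le> B\<close> real_sqrt_le_mono by fastforce
qed

lemma l2_finite_sum_approx:
  assumes "x \<in> l2" "e > 0"
  obtains F where "finite F" "(l2norm x)^2 - e < (\<Sum>i\<in>F. (cmod (x i))^2)"
proof -
  have "(\<lambda>i. (cmod (x i))^2) summable_on UNIV" using assms unfolding l2_def by simp
  then obtain F where F: "finite F"
      "dist (\<Sum>i\<in>F. (cmod (x i))^2) (\<Sum>\<^sub>\<infinity>i. (cmod (x i))^2) \<le> e/2"
    using infsum_finite_approximation[of _ UNIV "e/2"] assms(2) by auto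
  have "(l2norm x)^2 - e < (\<Sum>i\<in>F. (cmod (x i))^2)"
    using F(2) assms(2) unfolding dist_real_def abs_le_iff l2norm_sq by linarith
  with F(1) show ?thesis by (rule that)
qed

lemma L2_set_cmod_add_le:
  "L2_set (\<lambda>i. cmod (x i + y i)) F \<le> L2_set (\<lambda>i. cmod (x i)) F + L2_set (\<lambda>i. cmod (y i)) F"
proof -
  have "L2_set (\<lambda>i. cmod (x i + y i)) F \<le> L2_set (\<lambda>i. cmod (x i) + cmod (y i)) F"
    by (rule L2_set_mono) (auto simp: norm_triangle_ineq)
  also have "\<dots> \<le> L2_set (\<lambda>i. cmod (x i)) F + L2_set (\<lambda>i. cmod (y i)) F"
    by (rule L2_set_triangle_ineq)
  finally show ?thesis .
qed

lemma l2_add: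
  assumes "x \<in> l2" "y \<in> l2"
  shows "(\<lambda>i. x i + y i) \<in> l2" "l2norm (\<lambda>i. x i + y i) \<le> l2norm x + l2norm y"
proof -
  have bound: "(\<Sum>i\<in>F. (cmod (x i + y i))^2) \<le> (l2norm x + l2norm y)^2" if F: "finite F" for F
  proof -
    have "L2_set (\<lambda>i. cmod (x i)) F \<le> l2norm x" "L2_set (\<lambda>i. cmod (y i)) F \<le> l2norm y"
      unfolding L2_set_def
      by (intro real_le_lsqrt l2norm_nonneg l2_finite_sum_le assms F)+
    then have "L2_set (\<lambda>i. cmod (x i + y i)) F \<le> l2norm x + l2norm y"
      using L2_set_cmod_add_le[of x y F] by linarith
    then show ?thesis unfolding L2_set_def by (rule sqrt_le_D)
  qed
  have "0 \<le> l2norm x + l2norm y" by (simp add: l2norm_nonneg)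
  with bound show "(\<lambda>i. x i + y i) \<in> l2" "l2norm (\<lambda>i. x i + y i) \<le> l2norm x + l2norm y"
    by (fact l2I_finite_sums_bounded)+
qed

lemma l2_scale:
  assumes "x \<in> l2"
  shows "(\<lambda>i. c * x i) \<in> l2" "l2norm (\<lambda>i. c * x i) = cmod c * l2norm x"
proof -
  have "(\<lambda>i. (cmod (c * x i))^2) = (\<lambda>i. (cmod c)^2 * (cmod (x i))^2)"
    by (simp add: norm_mult power_mult_distrib)
  moreover have "(\<lambda>i. (cmod c)^2 * (cmod (x i))^2) summable_on UNIV"
    using assms unfolding l2_def by (intro summable_on_cmult_right) auto
  ultimately show "(\<lambda>i. c * x i) \<in> l2" unfolding l2_def by simp
  have "(\<Sum>\<^sub>\<infinity>i. (cmod (c * x i))^2) = (cmod c)^2 * (\<Sum>\<^sub>\<infinity>i. (cmod (x i))^2)"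
    by (simp add: norm_mult power_mult_distrib infsum_cmult_right')
  then show "l2norm (\<lambda>i. c * x i) = cmod c * l2norm x"
    unfolding l2norm_def by (simp add: real_sqrt_mult)
qed

lemma l2_zero: "(\<lambda>i. 0) \<in> l2" "l2norm (\<lambda>i. 0) = 0"
  unfolding l2_def l2norm_def by auto

lemma l2_diff: "x \<in> l2 \<Longrightarrow> y \<in> l2 \<Longrightarrow> (\<lambda>i. x i - y i) \<in> l2"
  using l2_add(1)[of x "\<lambda>i. (-1) * y i"] l2_scale(1)[of y "-1"] by simp

lemma l2_sum:
  assumes "finite Q" "\<And>q. q \<in> Q \<Longrightarrow> f q \<in> l2"
  shows "(\<lambda>i. \<Sum>q\<in>Q. f q i) \<in> l2 \<and> l2norm (\<lambda>i. \<Sum>q\<in>Q. f q i) \<le> (\<Sum>q\<in>Q. l2norm (f q))"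
  using assms
proof (induction Q rule: finite_induct)
  case empty
  then show ?case by (simp add: l2_zero)
next
  case (insert q Q)
  have fq: "f q \<in> l2" using insert.prems by simp
  have IH: "(\<lambda>i. \<Sum>q\<in>Q. f q i) \<in> l2 \<and> l2norm (\<lambda>i. \<Sum>q\<in>Q. f q i) \<le> (\<Sum>q\<in>Q. l2norm (f q))"
    using insert.IH insert.prems by simp
  have "(\<lambda>i. \<Sum>q\<in>insert q Q. f q i) = (\<lambda>i. f q i + (\<Sum>q\<in>Q. f q i))"
    using insert.hyps by simp
  then show ?case using l2_add[OF fq IH[THEN conjunct1]] IH insert.hyps by simp
qed

lemma l2_finite_support:
  assumes "finite G" "\<And>i. i \<notin> G \<Longrightarrow> x i = 0"
  shows "x \<in> l2" "(l2norm x)^2 = (\<Sum>i\<in>G. (cmod (x i))^2)"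
proof -
  have "(\<lambda>i. (cmod (x i))^2) summable_on G" using assms(1) by (rule summable_on_finite)
  moreover have "(\<lambda>i. (cmod (x i))^2) summable_on G \<longleftrightarrow> (\<lambda>i. (cmod (x i))^2) summable_on UNIV"
    by (rule summable_on_cong_neutral) (use assms(2) in auto)
  ultimately have "(\<lambda>i. (cmod (x i))^2) summable_on UNIV" by simp
  then show "x \<in> l2" unfolding l2_def by simp
  have "(\<Sum>\<^sub>\<infinity>i. (cmod (x i))^2) = (\<Sum>\<^sub>\<infinity>i\<in>G. (cmod (x i))^2)"
    by (rule infsum_cong_neutral) (use assms(2) in auto)
  then show "(l2norm x)^2 = (\<Sum>i\<in>G. (cmod (x i))^2)" using assms(1) by (simp add: l2norm_sq)
qed

lemma l2inner_finite_support:
  assumes "finite G" "\<And>i. i \<notin> G \<Longrightarrow> x i = 0"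
  shows "l2inner y x = (\<Sum>i\<in>G. y i * cnj (x i))"
proof -
  have "(\<Sum>\<^sub>\<infinity>i. y i * cnj (x i)) = (\<Sum>\<^sub>\<infinity>i\<in>G. y i * cnj (x i))"
    by (rule infsum_cong_neutral) (use assms(2) in auto)
  then show ?thesis using assms(1) by (simp add: l2inner_def)
qed

definition trunc :: "'i set \<Rightarrow> ('i \<Rightarrow> complex) \<Rightarrow> 'i \<Rightarrow> complex" where
  "trunc F x = (\<lambda>i. if i \<in> F then x i else 0)"

lemma l2_trunc:
  assumes "finite F"
  shows "trunc F x \<in> l2" "(l2norm (trunc F x))^2 = (\<Sum>i\<in>F. (cmod (x i))^2)"
  using l2_finite_support[OF assms, of "trunc F x"] by (auto simp: trunc_def)

lemma l2norm_trunc_tail: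
  assumes "x \<in> l2" "finite F"
  shows "(l2norm (\<lambda>i. x i - trunc F x i))^2 \<le> (l2norm x)^2 - (\<Sum>i\<in>F. (cmod (x i))^2)"
proof -
  define B where "B = sqrt ((l2norm x)^2 - (\<Sum>i\<in>F. (cmod (x i))^2))"
  have "0 \<le> (l2norm x)^2 - (\<Sum>i\<in>F. (cmod (x i))^2)" using l2_finite_sum_le[OF assms] by linarith
  then have B: "B^2 = (l2norm x)^2 - (\<Sum>i\<in>F. (cmod (x i))^2)" "0 \<le> B" unfolding B_def by simp_all
  have "(\<Sum>i\<in>H. (cmod (x i - trunc F x i))^2) \<le> B^2" if H: "finite H" for H
  proof -
    have "(\<Sum>i\<in>H. (cmod (x i - trunc F x i))^2) = (\<Sum>i\<in>H. if i \<in> F then 0 else (cmod (x i))^2)"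
      by (rule sum.cong) (auto simp: trunc_def)
    also have "\<dots> = (\<Sum>i\<in>H - F. (cmod (x i))^2)"
      using H by (simp add: sum.If_cases Diff_eq)
    also have "\<dots> = (\<Sum>i\<in>(H - F) \<union> F. (cmod (x i))^2) - (\<Sum>i\<in>F. (cmod (x i))^2)"
      using H assms(2) by (subst sum.union_disjoint) auto
    also have "\<dots> \<le> B^2"
      using l2_finite_sum_le[OF assms(1), of "(H - F) \<union> F"] H assms(2) B(1) by simp
    finally show ?thesis .
  qed
  then have "l2norm (\<lambda>i. x i - trunc F x i) \<le> B" by (rule l2I_finite_sums_bounded(2)[OF _ B(2)])
  then show ?thesis using B by (metis l2norm_nonneg power_mono)
qed

lemma summable_on_Inl_Inr_iff:
  fixes f :: "'a + 'b \<Rightarrow> 'c::banach"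
  shows "f summable_on UNIV \<longleftrightarrow> (f \<circ> Inl) summable_on UNIV \<and> (f \<circ> Inr) summable_on UNIV"
proof -
  have "f summable_on UNIV \<longleftrightarrow> f summable_on range Inl \<and> f summable_on range Inr"
  proof
    assume "f summable_on UNIV"
    then show "f summable_on range Inl \<and> f summable_on range Inr"
      using summable_on_subset_banach[of f UNIV] by blast
  next
    assume "f summable_on range Inl \<and> f summable_on range Inr"
    then have "f summable_on (range Inl \<union> range Inr)" by (intro summable_on_Un_disjoint) auto
    then show "f summable_on UNIV" by (simp only: UNIV_sum[symmetric])
  qed
  then show ?thesis by (simp add: summable_on_reindex)
qed

lemma infsum_Inl_Inr:
  fixes f :: "'a + 'b \<Rightarrow> 'c::banach"
  assumes "(f \<circ> Inl) summable_on UNIV" "(f \<circ> Inr) summable_on UNIV"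
  shows "infsum f UNIV = infsum (f \<circ> Inl) UNIV + infsum (f \<circ> Inr) UNIV"
proof -
  have "f summable_on range Inl" "f summable_on range Inr"
    using assms by (simp_all add: summable_on_reindex)
  then have "infsum f (range Inl \<union> range Inr) = infsum f (range Inl) + infsum f (range Inr)"
    by (intro infsum_Un_disjoint) auto
  then have "infsum f UNIV = infsum f (range Inl) + infsum f (range Inr)"
    by (simp only: UNIV_sum[symmetric])
  then show ?thesis by (simp add: infsum_reindex)
qed

lemma l2_case_sum: "case_sum x y \<in> l2 \<longleftrightarrow> x \<in> l2 \<and> y \<in> l2"
  using summable_on_Inl_Inr_iff[of "\<lambda>i. (cmod (case_sum x y i))^2"] unfolding l2_def by (simp add: o_def)

lemma l2_iff_comp_Inl_Inr: "z \<in> l2 \<longleftrightarrow> z \<circ> Inl \<in> l2 \<and> z \<circ> Inr \<in> l2"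
  using l2_case_sum[of "z \<circ> Inl" "z \<circ> Inr"] by (simp only: case_sum_expand_Inr_pointfree)

lemma l2norm_case_sum:
  assumes "x \<in> l2" "y \<in> l2"
  shows "(l2norm (case_sum x y))^2 = (l2norm x)^2 + (l2norm y)^2"
  using infsum_Inl_Inr[of "\<lambda>i. (cmod (case_sum x y i))^2"] assms
  unfolding l2norm_sq l2_def by (simp add: o_def)

lemma l2inner_summable:
  assumes "x \<in> l2" "y \<in> l2"
  shows "(\<lambda>i. x i * cnj (y i)) summable_on UNIV"
proof -
  have "(\<lambda>i. (cmod (x i))^2 + (cmod (y i))^2) summable_on UNIV"
    using assms unfolding l2_def by (intro summable_on_add) auto
  moreover have "norm (x i * cnj (y i)) \<le> (cmod (x i))^2 + (cmod (y i))^2" for i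
    using sum_squares_bound[of "cmod (x i)" "cmod (y i)"]
      mult_nonneg_nonneg[OF norm_ge_zero norm_ge_zero, of "x i" "y i"]
    unfolding norm_mult complex_mod_cnj by linarith
  ultimately have "(\<lambda>i. norm (x i * cnj (y i))) summable_on UNIV"
    by (rule summable_on_comparison_test) auto
  then show ?thesis by (rule abs_summable_summable)
qed

lemma l2inner_case_sum:
  assumes "a \<in> l2" "b \<in> l2" "c \<in> l2" "d \<in> l2"
  shows "l2inner (case_sum a b) (case_sum c d) = l2inner a c + l2inner b d"
  using infsum_Inl_Inr[of "\<lambda>i. case_sum a b i * cnj (case_sum c d i)"]
    l2inner_summable[OF assms(1,3)] l2inner_summable[OF assms(2,4)]
  unfolding l2inner_def by (simp add: o_def)

lemma cvnorm_L2: "cvnorm n v = L2_set (\<lambda>k. cmod (v k)) {..<n}"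
  by (simp add: cvnorm_def L2_set_def)

lemma cvnorm_sq: "(cvnorm n v)^2 = (\<Sum>k<n. (cmod (v k))^2)"
  by (simp add: cvnorm_def sum_nonneg)

lemma cvnorm_nonneg: "0 \<le> cvnorm n v"
  by (simp add: cvnorm_def sum_nonneg)

lemma cvnorm_zero: "cvnorm n (\<lambda>k. 0) = 0"
  by (simp add: cvnorm_def)

lemma cvnorm_add_le: "cvnorm n (\<lambda>k. a k + b k) \<le> cvnorm n a + cvnorm n b"
  unfolding cvnorm_L2 by (rule L2_set_cmod_add_le)

lemma cmod_le_cvnorm: "k < n \<Longrightarrow> cmod (v k) \<le> cvnorm n v"
  unfolding cvnorm_L2 by (rule member_le_L2_set) auto

lemma cmapply_add: "cmapply n (\<lambda>p q. A p q + B p q) v = (\<lambda>k. cmapply n A v k + cmapply n B v k)"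
  by (simp add: cmapply_def sum.distrib distrib_right)

lemma cmnorm_bdd_above: "bdd_above ((\<lambda>v. cvnorm n (cmapply n A v)) ` {v. cvnorm n v \<le> 1})"
proof (rule bdd_aboveI[where M="\<Sum>k<n. \<Sum>m<n. cmod (A k m)"])
  fix y assume "y \<in> (\<lambda>v. cvnorm n (cmapply n A v)) ` {v. cvnorm n v \<le> 1}"
  then obtain v where v: "cvnorm n v \<le> 1" and y: "y = cvnorm n (cmapply n A v)" by auto
  have "y \<le> (\<Sum>k<n. cmod (cmapply n A v k))"
    unfolding y cvnorm_L2 by (rule L2_set_le_sum) simp
  also have "\<dots> \<le> (\<Sum>k<n. \<Sum>m<n. cmod (A k m * v m))"
    unfolding cmapply_def by (intro sum_mono norm_sum)
  also have "\<dots> \<le> (\<Sum>k<n. \<Sum>m<n. cmod (A k m))"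
  proof (intro sum_mono)
    fix k m assume "m \<in> {..<n}"
    then have "cmod (v m) \<le> 1" using cmod_le_cvnorm[of m n v] v by simp
    then show "cmod (A k m * v m) \<le> cmod (A k m)" by (simp add: norm_mult mult_left_le)
  qed
  finally show "y \<le> (\<Sum>k<n. \<Sum>m<n. cmod (A k m))" .
qed

lemma cmnorm_upper: "cvnorm n v \<le> 1 \<Longrightarrow> cvnorm n (cmapply n A v) \<le> cmnorm n A"
  unfolding cmnorm_def by (rule cSUP_upper[OF _ cmnorm_bdd_above]) simp

lemma cmnorm_least:
  assumes "\<And>v. cvnorm n v \<le> 1 \<Longrightarrow> cvnorm n (cmapply n A v) \<le> B"
  shows "cmnorm n A \<le> B"
  unfolding cmnorm_def
proof (rule cSUP_least)
  have "(\<lambda>k. 0) \<in> {v. cvnorm n v \<le> 1}" by (simp add: cvnorm_zero)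
  then show "{v. cvnorm n v \<le> 1} \<noteq> {}" by blast
qed (use assms in simp)

lemma cmnorm_nonneg: "0 \<le> cmnorm n A"
  using cmnorm_upper[of n "\<lambda>k. 0" A] cvnorm_zero[of n] cvnorm_nonneg[of n "cmapply n A (\<lambda>k. 0)"]
  by simp

lemma cmnorm_add_le: "cmnorm n (\<lambda>p q. A p q + B p q) \<le> cmnorm n A + cmnorm n B"
proof (rule cmnorm_least)
  fix v assume v: "cvnorm n v \<le> 1"
  have "cvnorm n (cmapply n (\<lambda>p q. A p q + B p q) v) \<le> cvnorm n (cmapply n A v) + cvnorm n (cmapply n B v)"
    unfolding cmapply_add by (rule cvnorm_add_le)
  also have "\<dots> \<le> cmnorm n A + cmnorm n B"
    using cmnorm_upper[OF v, of A] cmnorm_upper[OF v, of B] by linarith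
  finally show "cvnorm n (cmapply n (\<lambda>p q. A p q + B p q) v) \<le> cmnorm n A + cmnorm n B" .
qed

lemma cmnorm_zero: "cmnorm n (\<lambda>p q. 0) = 0"
proof -
  have "cmnorm n (\<lambda>p q. 0) \<le> 0"
    by (rule cmnorm_least) (simp add: cmapply_def cvnorm_zero)
  then show ?thesis using cmnorm_nonneg[of n "\<lambda>p q. 0"] by linarith
qed

lemma cmpos_add: "cmpos n A \<Longrightarrow> cmpos n B \<Longrightarrow> cmpos n (\<lambda>p q. A p q + B p q)"
  unfolding cmpos_def cmapply_add by (simp add: distrib_left sum.distrib)

lemma cmpos_zero: "cmpos n (\<lambda>p q. 0)"
  unfolding cmpos_def by (simp add: cmapply_def)

text \<open>Indices of a block matrix in \<open>M\<^sub>n(M\<^sub>k)\<close> are written \<open>a * k + p\<close> with \<open>p < k\<close>,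
  as in \<^const>\<open>amp\<close>.\<close>

lemma sum_lessThan_mult_blocks: "(\<Sum>r<(n::nat)*k. h r) = (\<Sum>a<n. \<Sum>p<k. h (a*k+p))"
proof (induction n)
  case (Suc n)
  have shift: "(\<Sum>r<m+l. h r) = (\<Sum>r<m. h r) + (\<Sum>p<l. h (m+p))" for m l :: nat
    by (induction l) (simp_all add: add.assoc)
  show ?case using Suc.IH shift[of "n*k" k] by (simp add: add.commute)
qed simp

lemma cmnorm_block_entry_le:
  assumes a: "a < n" and b: "b < n"
  shows "cmnorm m (\<lambda>p q. A (p*n+a) (q*n+b)) \<le> cmnorm (m*n) A"
proof (rule cmnorm_least)
  fix w assume w: "cvnorm m w \<le> 1"
  define W where "W r = (if r mod n = b then w (r div n) else 0)" for r
  have W_block: "W (p*n+q) = (if q = b then w p else 0)" if "q < n" for p q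
    using that by (simp add: W_def)
  have "(cvnorm (m*n) W)^2 = (\<Sum>p<m. \<Sum>q<n. (cmod (W (p*n+q)))^2)"
    unfolding cvnorm_sq by (rule sum_lessThan_mult_blocks)
  also have "\<dots> = (cvnorm m w)^2"
    using b by (simp add: W_block cvnorm_sq if_distrib[of "\<lambda>z. (cmod z)^2"] cong: if_cong)
  finally have W_norm: "cvnorm (m*n) W = cvnorm m w" by (simp add: cvnorm_nonneg power2_eq_iff_nonneg)
  have AW: "cmapply (m*n) A W (p*n+a) = cmapply m (\<lambda>p q. A (p*n+a) (q*n+b)) w p" for p
  proof -
    have "cmapply (m*n) A W (p*n+a) = (\<Sum>p'<m. \<Sum>q<n. A (p*n+a) (p'*n+q) * W (p'*n+q))"
      unfolding cmapply_def by (rule sum_lessThan_mult_blocks)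
    also have "\<dots> = cmapply m (\<lambda>p q. A (p*n+a) (q*n+b)) w p"
      using b by (simp add: W_block cmapply_def if_distrib cong: if_cong)
    finally show ?thesis .
  qed
  have "(cvnorm m (cmapply m (\<lambda>p q. A (p*n+a) (q*n+b)) w))^2
      = (\<Sum>p<m. (cmod (cmapply (m*n) A W (p*n+a)))^2)"
    unfolding cvnorm_sq AW ..
  also have "\<dots> \<le> (\<Sum>p<m. \<Sum>q<n. (cmod (cmapply (m*n) A W (p*n+q)))^2)"
    by (intro sum_mono member_le_sum) (use a in auto)
  also have "\<dots> = (cvnorm (m*n) (cmapply (m*n) A W))^2"
    unfolding cvnorm_sq by (rule sum_lessThan_mult_blocks[symmetric])
  finally have "cvnorm m (cmapply m (\<lambda>p q. A (p*n+a) (q*n+b)) w) \<le> cvnorm (m*n) (cmapply (m*n) A W)"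
    using power2_le_imp_le cvnorm_nonneg by blast
  also have "\<dots> \<le> cmnorm (m*n) A" by (rule cmnorm_upper) (simp add: W_norm w)
  finally show "cvnorm m (cmapply m (\<lambda>p q. A (p*n+a) (q*n+b)) w) \<le> cmnorm (m*n) A" .
qed

lemma bop_l2: "T \<in> bop \<Longrightarrow> x \<in> l2 \<Longrightarrow> T x \<in> l2"
  unfolding bop_def by blast

lemma bop_add: "T \<in> bop \<Longrightarrow> x \<in> l2 \<Longrightarrow> y \<in> l2 \<Longrightarrow> T (\<lambda>i. x i + y i) = (\<lambda>i. T x i + T y i)"
  unfolding bop_def by blast

lemma bop_scale: "T \<in> bop \<Longrightarrow> x \<in> l2 \<Longrightarrow> T (\<lambda>i. c * x i) = (\<lambda>i. c * T x i)"
  unfolding bop_def by blast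

lemma bop_zero: "T \<in> bop \<Longrightarrow> T (\<lambda>i. 0) = (\<lambda>i. 0)"
  using bop_scale[of T "\<lambda>i. 0" 0] l2_zero(1) by simp

lemma bop_bounded:
  assumes "T \<in> bop"
  obtains K where "K \<ge> 0" "\<And>x. x \<in> l2 \<Longrightarrow> l2norm (T x) \<le> K * l2norm x"
proof -
  obtain K where K: "\<forall>x\<in>l2. l2norm (T x) \<le> K * l2norm x" using assms unfolding bop_def by blast
  have "l2norm (T x) \<le> max K 0 * l2norm x" if "x \<in> l2" for x
  proof -
    have "l2norm (T x) \<le> K * l2norm x" using K that by blast
    also have "\<dots> \<le> max K 0 * l2norm x" by (intro mult_right_mono l2norm_nonneg) simp
    finally show ?thesis .
  qed
  then show ?thesis using that[of "max K 0"] by simp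
qed

lemma bop_sum:
  assumes "T \<in> bop" "finite Q" "\<And>q. q \<in> Q \<Longrightarrow> e q \<in> l2"
  shows "T (\<lambda>i. \<Sum>q\<in>Q. c q * e q i) = (\<lambda>i. \<Sum>q\<in>Q. c q * T (e q) i)"
  using assms(2,3)
proof (induction Q rule: finite_induct)
  case empty
  then show ?case using bop_zero[OF assms(1)] by simp
next
  case (insert q Q)
  have eq: "e q \<in> l2" using insert.prems by simp
  have "(\<lambda>i. \<Sum>q\<in>Q. c q * e q i) \<in> l2"
    using l2_sum[of Q "\<lambda>q i. c q * e q i"] insert.hyps(1) insert.prems by (simp add: l2_scale(1))
  then have "T (\<lambda>i. c q * e q i + (\<Sum>q\<in>Q. c q * e q i))
      = (\<lambda>i. T (\<lambda>i. c q * e q i) i + T (\<lambda>i. \<Sum>q\<in>Q. c q * e q i) i)"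
    by (rule bop_add[OF assms(1) l2_scale(1)[OF eq]])
  then show ?case using insert bop_scale[OF assms(1) eq] by simp
qed

lemma tnorm_L2: "tnorm n u = L2_set (\<lambda>k. l2norm (u k)) {..<n}"
  by (simp add: tnorm_def L2_set_def)

lemma tnorm_sq: "(tnorm n u)^2 = (\<Sum>a<n. (l2norm (u a))^2)"
  unfolding tnorm_def by (simp add: sum_nonneg)

lemma tnorm_nonneg: "0 \<le> tnorm n u"
  by (simp add: tnorm_def sum_nonneg)

lemma l2norm_le_tnorm: "k < n \<Longrightarrow> l2norm (u k) \<le> tnorm n u"
  unfolding tnorm_L2 by (rule member_le_L2_set) (auto simp: l2norm_nonneg)

lemma tup_l2_zero: "(\<lambda>k i. 0) \<in> tup_l2 n" "tnorm n (\<lambda>k i. 0) = 0"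
  by (simp_all add: tup_l2_def tnorm_def l2_zero)

lemma tup_l2_add: "u \<in> tup_l2 n \<Longrightarrow> w \<in> tup_l2 n \<Longrightarrow> (\<lambda>a i. u a i + w a i) \<in> tup_l2 n"
  unfolding tup_l2_def by (simp add: l2_add(1))

lemma tup_l2_diff: "u \<in> tup_l2 n \<Longrightarrow> w \<in> tup_l2 n \<Longrightarrow> (\<lambda>a i. u a i - w a i) \<in> tup_l2 n"
  unfolding tup_l2_def by (simp add: l2_diff)

lemma tnorm_add_le:
  assumes "u \<in> tup_l2 n" "w \<in> tup_l2 n"
  shows "tnorm n (\<lambda>a i. u a i + w a i) \<le> tnorm n u + tnorm n w"
proof -
  have "tnorm n (\<lambda>a i. u a i + w a i) \<le> L2_set (\<lambda>a. l2norm (u a) + l2norm (w a)) {..<n}"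
    unfolding tnorm_L2 using assms
    by (intro L2_set_mono) (auto simp: tup_l2_def l2_add(2) l2norm_nonneg)
  also have "\<dots> \<le> tnorm n u + tnorm n w"
    unfolding tnorm_L2 by (rule L2_set_triangle_ineq)
  finally show ?thesis .
qed

lemma tapply_entry_l2:
  assumes "\<And>a b. a < n \<Longrightarrow> b < n \<Longrightarrow> T a b \<in> bop" "u \<in> tup_l2 n" "a < n"
  shows "tapply n T u a \<in> l2" "l2norm (tapply n T u a) \<le> (\<Sum>b<n. l2norm (T a b (u b)))"
proof -
  have "T a b (u b) \<in> l2" if "b \<in> {..<n}" for b
    using assms that by (auto simp: tup_l2_def intro: bop_l2)
  then show "tapply n T u a \<in> l2" "l2norm (tapply n T u a) \<le> (\<Sum>b<n. l2norm (T a b (u b)))"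
    using l2_sum[of "{..<n}" "\<lambda>b. T a b (u b)"] unfolding tapply_def by blast+
qed

lemma tapply_tup_l2:
  assumes "\<And>a b. a < n \<Longrightarrow> b < n \<Longrightarrow> T a b \<in> bop" "u \<in> tup_l2 n"
  shows "tapply n T u \<in> tup_l2 n"
  using tapply_entry_l2(1)[of n T u, OF assms] unfolding tup_l2_def by blast

lemma tapply_add:
  assumes "\<And>a b. a < n \<Longrightarrow> b < n \<Longrightarrow> T a b \<in> bop" "u \<in> tup_l2 n" "w \<in> tup_l2 n" "a < n"
  shows "tapply n T (\<lambda>a i. u a i + w a i) a = (\<lambda>i. tapply n T u a i + tapply n T w a i)"
proof (intro ext)
  fix i
  have entry: "T a b (\<lambda>i. u b i + w b i) i = T a b (u b) i + T a b (w b) i" if "b \<in> {..<n}" for b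
    using assms that by (subst bop_add) (auto simp: tup_l2_def)
  show "tapply n T (\<lambda>a i. u a i + w a i) a i = tapply n T u a i + tapply n T w a i"
    unfolding tapply_def sum.distrib[symmetric] by (rule sum.cong[OF refl entry])
qed

lemma tapply_zero:
  assumes "\<And>a b. a < n \<Longrightarrow> b < n \<Longrightarrow> T a b \<in> bop"
  shows "tnorm n (tapply n T (\<lambda>b i. 0)) = 0"
proof -
  have "tapply n T (\<lambda>b i. 0) a = (\<lambda>i. 0)" if "a \<in> {..<n}" for a
  proof -
    have "T a b (\<lambda>i. 0) = (\<lambda>i. 0)" if "b \<in> {..<n}" for b
      using assms \<open>a \<in> {..<n}\<close> that by (simp add: bop_zero)
    then show ?thesis unfolding tapply_def by (intro ext sum.neutral) simp
  qed
  then have "(\<Sum>a<n. (l2norm (tapply n T (\<lambda>b i. 0) a))^2) = 0"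
    by (intro sum.neutral) (simp add: l2_zero)
  then show ?thesis unfolding tnorm_def by simp
qed

lemma tapply_bounded:
  assumes "\<And>a b. a < n \<Longrightarrow> b < n \<Longrightarrow> T a b \<in> bop"
  obtains K where "K \<ge> 0" "\<And>u. u \<in> tup_l2 n \<Longrightarrow> tnorm n (tapply n T u) \<le> K * tnorm n u"
proof -
  have bounded: "\<exists>L. L \<ge> 0 \<and> (\<forall>x\<in>l2. l2norm (T a b x) \<le> L * l2norm x)"
    if ab: "a < n" "b < n" for a b
  proof -
    obtain L where "L \<ge> 0" "\<And>x. x \<in> l2 \<Longrightarrow> l2norm (T a b x) \<le> L * l2norm x"
      by (rule bop_bounded[OF assms[OF ab]]) blast
    then show ?thesis by blast
  qed
  define K where "K a b = (SOME L. L \<ge> 0 \<and> (\<forall>x\<in>l2. l2norm (T a b x) \<le> L * l2norm x))" for a b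
  have K_spec: "K a b \<ge> 0 \<and> (\<forall>x\<in>l2. l2norm (T a b x) \<le> K a b * l2norm x)" if "a < n" "b < n" for a b
    unfolding K_def by (rule someI_ex[OF bounded[OF that]])
  have K: "K a b \<ge> 0" "\<And>x. x \<in> l2 \<Longrightarrow> l2norm (T a b x) \<le> K a b * l2norm x"
    if "a < n" "b < n" for a b
    using K_spec[OF that] by simp_all
  have nonneg: "(\<Sum>a<n. \<Sum>b<n. K a b) \<ge> 0" by (intro sum_nonneg K(1)) auto
  have bound: "tnorm n (tapply n T u) \<le> (\<Sum>a<n. \<Sum>b<n. K a b) * tnorm n u" if u: "u \<in> tup_l2 n" for u
  proof -
    have "tnorm n (tapply n T u) \<le> (\<Sum>a<n. l2norm (tapply n T u a))"
      unfolding tnorm_L2 by (rule L2_set_le_sum) (simp add: l2norm_nonneg)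
    also have "\<dots> \<le> (\<Sum>a<n. \<Sum>b<n. l2norm (T a b (u b)))"
    proof (rule sum_mono)
      fix a assume "a \<in> {..<n}"
      then show "l2norm (tapply n T u a) \<le> (\<Sum>b<n. l2norm (T a b (u b)))"
        by (intro tapply_entry_l2(2)) (use assms u in auto)
    qed
    also have "\<dots> \<le> (\<Sum>a<n. \<Sum>b<n. K a b * tnorm n u)"
    proof (intro sum_mono)
      fix a b assume "a \<in> {..<n}" "b \<in> {..<n}"
      then have ab: "a < n" "b < n" and "u b \<in> l2" using u by (auto simp: tup_l2_def)
      then have "l2norm (T a b (u b)) \<le> K a b * l2norm (u b)" by (intro K(2))
      also have "\<dots> \<le> K a b * tnorm n u"
        by (rule mult_left_mono[OF l2norm_le_tnorm[OF ab(2)] K(1)[OF ab]])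
      finally show "l2norm (T a b (u b)) \<le> K a b * tnorm n u" .
    qed
    finally show ?thesis by (simp add: sum_distrib_right)
  qed
  show ?thesis by (rule that[OF nonneg bound])
qed

lemma bop_mnorm_bdd_above:
  assumes "\<And>a b. a < n \<Longrightarrow> b < n \<Longrightarrow> T a b \<in> bop"
  shows "bdd_above ((\<lambda>u. tnorm n (tapply n T u)) ` {u\<in>tup_l2 n. tnorm n u \<le> 1})"
proof -
  obtain K where K: "K \<ge> 0" "\<And>u. u \<in> tup_l2 n \<Longrightarrow> tnorm n (tapply n T u) \<le> K * tnorm n u"
    using tapply_bounded[of n T, OF assms] by blast
  have "tnorm n (tapply n T u) \<le> K" if "u \<in> tup_l2 n" "tnorm n u \<le> 1" for u
    using K(2)[OF that(1)] mult_left_le[OF that(2) K(1)] by linarith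
  then show ?thesis by (intro bdd_aboveI[where M=K]) auto
qed

lemma bop_mnorm_upper:
  assumes "\<And>a b. a < n \<Longrightarrow> b < n \<Longrightarrow> T a b \<in> bop" "u \<in> tup_l2 n" "tnorm n u \<le> 1"
  shows "tnorm n (tapply n T u) \<le> bop_mnorm n T"
  unfolding bop_mnorm_def
  by (rule cSUP_upper[OF _ bop_mnorm_bdd_above[of n T, OF assms(1)]]) (simp add: assms(2,3))

lemma bop_mnorm_least:
  fixes T :: "nat \<Rightarrow> nat \<Rightarrow> ('i \<Rightarrow> complex) \<Rightarrow> ('i \<Rightarrow> complex)"
  assumes "\<And>u. u \<in> tup_l2 n \<Longrightarrow> tnorm n u \<le> 1 \<Longrightarrow> tnorm n (tapply n T u) \<le> B"
  shows "bop_mnorm n T \<le> B"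
  unfolding bop_mnorm_def
proof (rule cSUP_least)
  have "(\<lambda>k i. 0) \<in> {u :: nat \<Rightarrow> 'i \<Rightarrow> complex. u \<in> tup_l2 n \<and> tnorm n u \<le> 1}"
    by (simp add: tup_l2_zero)
  then show "{u :: nat \<Rightarrow> 'i \<Rightarrow> complex. u \<in> tup_l2 n \<and> tnorm n u \<le> 1} \<noteq> {}" by blast
qed (use assms in simp)

lemma bop_mnorm_nonneg:
  assumes "\<And>a b. a < n \<Longrightarrow> b < n \<Longrightarrow> T a b \<in> bop"
  shows "0 \<le> bop_mnorm n T"
proof -
  have "tnorm n (tapply n T (\<lambda>k i. 0)) \<le> bop_mnorm n T"
    by (rule bop_mnorm_upper[of n T, OF assms]) (simp_all add: tup_l2_zero)
  then show ?thesis using tnorm_nonneg[of n "tapply n T (\<lambda>k i. 0)"] by linarith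
qed

lemma bop_mpos_zero: "bop_mpos n (\<lambda>a b x i. 0)"
  unfolding bop_mpos_def tapply_def by (simp add: tinner_def l2inner_def)

lemma l2_unit_vec: "(\<lambda>i. if i = i0 then 1 else 0) \<in> l2"
  by (rule l2_finite_support(1)[of "{i0}"]) auto

lemma tup_l2_trunc: "finite F \<Longrightarrow> (\<lambda>a. trunc F (u a)) \<in> tup_l2 n"
  unfolding tup_l2_def by (simp add: l2_trunc(1))

lemma tnorm_trunc_le:
  assumes "u \<in> tup_l2 n" "finite F"
  shows "tnorm n (\<lambda>a. trunc F (u a)) \<le> tnorm n u"
proof -
  have "l2norm (trunc F (u a)) \<le> l2norm (u a)" if "a \<in> {..<n}" for a
  proof -
    have "(l2norm (trunc F (u a)))^2 \<le> (l2norm (u a))^2"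
      using that assms by (simp add: l2_trunc(2) l2_finite_sum_le tup_l2_def)
    then show ?thesis using l2norm_nonneg power2_le_imp_le by blast
  qed
  then show ?thesis unfolding tnorm_L2 by (intro L2_set_mono) (simp_all add: l2norm_nonneg)
qed

locale os_embedding =
  fixes S :: "('v::ab_group_add) mstruct" and j :: "'v \<Rightarrow> ('i \<Rightarrow> complex) \<Rightarrow> ('i \<Rightarrow> complex)"
  assumes bop: "j x \<in> bop"
    and inj: "inj j"
    and add: "j (x + y) = (\<lambda>u i. j x u i + j y u i)"
    and scale: "j (msc S c x) = (\<lambda>u i. c * j x u i)"
    and mnorm_eq: "n \<ge> 1 \<Longrightarrow> mnorm S n X = bop_mnorm n (\<lambda>a b. j (X a b))"
    and mpos_iff: "n \<ge> 1 \<Longrightarrow> X \<in> mpos S n \<longleftrightarrow> bop_mpos n (\<lambda>a b. j (X a b))"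

lemma operator_system_os_embedding:
  assumes "operator_system TYPE('i) S"
  obtains j :: "'v::ab_group_add \<Rightarrow> ('i \<Rightarrow> complex) \<Rightarrow> ('i \<Rightarrow> complex)" where "os_embedding S j"
  using assms unfolding operator_system_def os_embedding_def by blast

context os_embedding
begin

lemma zero: "j 0 = (\<lambda>u i. 0)"
  using add[of 0 0] by (metis (no_types, lifting) add.right_neutral add_cancel_right_right fun_cong ext)

lemma msc_zero: "msc S c 0 = 0"
  using scale[of c 0] zero inj by (simp add: inj_eq[symmetric])

lemma mnorm_nonneg: "n \<ge> 1 \<Longrightarrow> 0 \<le> mnorm S n X"
  using mnorm_eq bop_mnorm_nonneg[of n "\<lambda>a b. j (X a b)"] bop by simp

lemma mnorm_zero: "n \<ge> 1 \<Longrightarrow> mnorm S n (\<lambda>a b. 0) = 0"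
proof -
  assume n: "n \<ge> 1"
  have "bop_mnorm n (\<lambda>a b. j 0) \<le> 0"
    by (rule bop_mnorm_least) (simp add: tapply_def zero tup_l2_zero)
  then show ?thesis using mnorm_eq[OF n, of "\<lambda>a b. 0"] mnorm_nonneg[OF n, of "\<lambda>a b. 0"] by simp
qed

lemma mpos_zero: "n \<ge> 1 \<Longrightarrow> (\<lambda>a b. 0) \<in> mpos S n"
  using mpos_iff[of n "\<lambda>a b. 0"] zero bop_mpos_zero[of n] by simp

lemma QS_zero: "(\<lambda>x a b. 0) \<in> QS S m"
  unfolding QS_def clin_mat_def amp_def
  by (auto simp: cmnorm_zero cmpos_zero mnorm_nonneg)

end

lemma QS_cmnorm_le: "\<phi> \<in> QS S m \<Longrightarrow> n \<ge> 1 \<Longrightarrow> cmnorm (n * m) (amp m \<phi> X) \<le> mnorm S n X"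
  unfolding QS_def by blast

section \<open>Compressions to finite sets of coordinates\<close>

definition compression ::
    "('v \<Rightarrow> ('i \<Rightarrow> complex) \<Rightarrow> ('i \<Rightarrow> complex)) \<Rightarrow> (nat \<Rightarrow> 'i) \<Rightarrow> 'v \<Rightarrow> nat \<Rightarrow> nat \<Rightarrow> complex" where
  "compression j f x p q = j x (\<lambda>i. if i = f q then 1 else 0) (f p)"

definition lift_vec :: "nat \<Rightarrow> (nat \<Rightarrow> 'i) \<Rightarrow> (nat \<Rightarrow> complex) \<Rightarrow> nat \<Rightarrow> 'i \<Rightarrow> complex" where
  "lift_vec k f v b = (\<lambda>i. \<Sum>q<k. v (b*k+q) * (if i = f q then 1 else 0))"

text \<open>The compression of \<open>j x\<close> to the span of the unit vectors at \<open>f 0, \<dots>, f (k - 1)\<close> is a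
  map \<open>S \<rightarrow> M\<^sub>k\<close>, and \<^const>\<open>lift_vec\<close> is the matching identification
  \<open>\<complex>\<^bsup>nk\<^esup> \<cong> (\<complex>\<^sup>k)\<^sup>n \<subseteq> H\<^sup>n\<close>.\<close>

context
  fixes f :: "nat \<Rightarrow> 'i" and k :: nat and F :: "'i set"
  assumes bij: "bij_betw f {..<k} F"
begin

lemma finite_coords: "finite F"
  using bij bij_betw_finite by blast

lemma sum_coords_reindex: "(\<Sum>i\<in>F. g i) = (\<Sum>p<k. g (f p))"
  using bij by (simp add: sum.reindex_bij_betw)

lemma lift_vec_at: "q < k \<Longrightarrow> lift_vec k f v b (f q) = v (b*k+q)"
proof -
  assume q: "q < k"
  have "lift_vec k f v b (f q) = (\<Sum>q'<k. if q' = q then v (b*k+q') else 0)"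
    unfolding lift_vec_def
    using q bij_betw_imp_inj_on[OF bij] by (intro sum.cong) (auto simp: inj_on_eq_iff)
  also have "\<dots> = v (b*k+q)" using q by simp
  finally show ?thesis .
qed

lemma lift_vec_outside: "i \<notin> F \<Longrightarrow> lift_vec k f v b i = 0"
  unfolding lift_vec_def using bij bij_betw_apply by (fastforce intro: sum.neutral)

lemma lift_vec_tup_l2: "lift_vec k f v \<in> tup_l2 n"
proof -
  have "lift_vec k f v b \<in> l2" for b
    by (rule l2_finite_support(1)[OF finite_coords]) (rule lift_vec_outside)
  then show ?thesis unfolding tup_l2_def by blast
qed

lemma tnorm_lift_vec: "tnorm n (lift_vec k f v) = cvnorm (n*k) v"
proof -
  have "(l2norm (lift_vec k f v b))^2 = (\<Sum>i\<in>F. (cmod (lift_vec k f v b i))^2)" for b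
    by (rule l2_finite_support(2)[OF finite_coords]) (rule lift_vec_outside)
  then have "(l2norm (lift_vec k f v b))^2 = (\<Sum>q<k. (cmod (v (b*k+q)))^2)" for b
    by (simp add: sum_coords_reindex lift_vec_at)
  then show ?thesis
    unfolding tnorm_def cvnorm_def by (simp add: sum_lessThan_mult_blocks)
qed

context
  fixes S :: "('v::ab_group_add) mstruct" and j :: "'v \<Rightarrow> ('i \<Rightarrow> complex) \<Rightarrow> ('i \<Rightarrow> complex)"
  assumes j: "os_embedding S j"
begin

lemma cmapply_amp_compression:
  assumes "a < n" "p < k"
  shows "cmapply (n*k) (amp k (compression j f) X) v (a*k+p)
       = tapply n (\<lambda>a b. j (X a b)) (lift_vec k f v) a (f p)"
proof -
  have j_lift: "j x (lift_vec k f v b) = (\<lambda>i. \<Sum>q<k. v (b*k+q) * j x (\<lambda>i. if i = f q then 1 else 0) i)" for x b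
    unfolding lift_vec_def by (rule bop_sum[OF os_embedding.bop[OF j]]) (simp_all add: l2_unit_vec)
  have "cmapply (n*k) (amp k (compression j f) X) v (a*k+p)
      = (\<Sum>b<n. \<Sum>q<k. amp k (compression j f) X (a*k+p) (b*k+q) * v (b*k+q))"
    unfolding cmapply_def by (rule sum_lessThan_mult_blocks)
  also have "\<dots> = (\<Sum>b<n. \<Sum>q<k. v (b*k+q) * j (X a b) (\<lambda>i. if i = f q then 1 else 0) (f p))"
    using assms(2) by (intro sum.cong refl) (simp add: amp_def compression_def mult.commute)
  also have "\<dots> = tapply n (\<lambda>a b. j (X a b)) (lift_vec k f v) a (f p)"
    by (simp add: tapply_def j_lift)
  finally show ?thesis .
qed

lemma cvnorm_cmapply_amp_compression:
  "cvnorm (n*k) (cmapply (n*k) (amp k (compression j f) X) v)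
     = tnorm n (\<lambda>a. trunc F (tapply n (\<lambda>a b. j (X a b)) (lift_vec k f v) a))"
proof -
  have "(cvnorm (n*k) (cmapply (n*k) (amp k (compression j f) X) v))^2
      = (\<Sum>a<n. \<Sum>p<k. (cmod (cmapply (n*k) (amp k (compression j f) X) v (a*k+p)))^2)"
    unfolding cvnorm_sq by (rule sum_lessThan_mult_blocks)
  also have "\<dots> = (\<Sum>a<n. \<Sum>i\<in>F. (cmod (tapply n (\<lambda>a b. j (X a b)) (lift_vec k f v) a i))^2)"
    by (intro sum.cong refl) (simp add: cmapply_amp_compression sum_coords_reindex)
  also have "\<dots> = (tnorm n (\<lambda>a. trunc F (tapply n (\<lambda>a b. j (X a b)) (lift_vec k f v) a)))^2"
    unfolding tnorm_sq by (simp add: l2_trunc(2)[OF finite_coords])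
  finally show ?thesis by (simp add: cvnorm_nonneg tnorm_nonneg power2_eq_iff_nonneg)
qed

lemma compression_cmnorm_le:
  assumes n: "n \<ge> 1"
  shows "cmnorm (n * k) (amp k (compression j f) X) \<le> mnorm S n X"
proof (rule cmnorm_least)
  fix v assume v: "cvnorm (n * k) v \<le> 1"
  let ?T = "\<lambda>a b. j (X a b)"
  have T: "?T a b \<in> bop" for a b by (rule os_embedding.bop[OF j])
  have W: "tapply n ?T (lift_vec k f v) \<in> tup_l2 n"
    by (rule tapply_tup_l2[of n ?T, OF T lift_vec_tup_l2])
  have "cvnorm (n*k) (cmapply (n*k) (amp k (compression j f) X) v)
      = tnorm n (\<lambda>a. trunc F (tapply n ?T (lift_vec k f v) a))"
    by (rule cvnorm_cmapply_amp_compression)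
  also have "\<dots> \<le> tnorm n (tapply n ?T (lift_vec k f v))"
    by (rule tnorm_trunc_le[OF W finite_coords])
  also have "\<dots> \<le> bop_mnorm n ?T"
    by (rule bop_mnorm_upper[of n ?T, OF T lift_vec_tup_l2]) (simp add: tnorm_lift_vec v)
  also have "\<dots> = mnorm S n X" using os_embedding.mnorm_eq[OF j n] by simp
  finally show "cvnorm (n * k) (cmapply (n * k) (amp k (compression j f) X) v) \<le> mnorm S n X" .
qed

lemma compression_cmpos:
  assumes n: "n \<ge> 1" and X: "X \<in> mpos S n"
  shows "cmpos (n * k) (amp k (compression j f) X)"
  unfolding cmpos_def
proof
  fix v
  let ?T = "\<lambda>a b. j (X a b)" and ?U = "lift_vec k f v"
  let ?W = "tapply n ?T ?U" and ?A = "amp k (compression j f) X"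
  have "(\<Sum>r<n*k. cnj (v r) * cmapply (n*k) ?A v r)
      = (\<Sum>a<n. \<Sum>p<k. cnj (v (a*k+p)) * cmapply (n*k) ?A v (a*k+p))"
    by (rule sum_lessThan_mult_blocks)
  also have "\<dots> = (\<Sum>a<n. \<Sum>p<k. ?W a (f p) * cnj (?U a (f p)))"
  proof (intro sum.cong refl)
    fix a p assume "a \<in> {..<n}" "p \<in> {..<k}"
    then have "cmapply (n*k) ?A v (a*k+p) = ?W a (f p)" "?U a (f p) = v (a*k+p)"
      by (simp_all add: cmapply_amp_compression lift_vec_at)
    then show "cnj (v (a*k+p)) * cmapply (n*k) ?A v (a*k+p) = ?W a (f p) * cnj (?U a (f p))"
      by (simp add: mult.commute)
  qed
  also have "\<dots> = (\<Sum>a<n. \<Sum>i\<in>F. ?W a i * cnj (?U a i))"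
    by (simp add: sum_coords_reindex)
  also have "\<dots> = tinner n ?W ?U"
    unfolding tinner_def by (intro sum.cong refl l2inner_finite_support[symmetric] finite_coords lift_vec_outside)
  finally have "(\<Sum>r<n*k. cnj (v r) * cmapply (n*k) ?A v r) = tinner n ?W ?U" .
  moreover have "bop_mpos n ?T" using os_embedding.mpos_iff[OF j n] X by simp
  ultimately show "Im (\<Sum>r<n*k. cnj (v r) * cmapply (n*k) ?A v r) = 0 \<and>
      0 \<le> Re (\<Sum>r<n*k. cnj (v r) * cmapply (n*k) ?A v r)"
    using lift_vec_tup_l2 unfolding bop_mpos_def by simp
qed

lemma compression_QS: "compression j f \<in> QS S k"
  unfolding QS_def
proof (intro CollectI conjI allI impI ballI compression_cmnorm_le compression_cmpos)
  show "clin_mat S (compression j f)"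
    unfolding clin_mat_def compression_def
    by (simp add: os_embedding.add[OF j] os_embedding.scale[OF j])
qed

end

end

section \<open>Quasistates are norming\<close>

lemma tnorm_cong:
  assumes "\<And>a. a < n \<Longrightarrow> u a = w a"
  shows "tnorm n u = tnorm n w"
  unfolding tnorm_def using assms by (intro arg_cong[where f = sqrt] sum.cong) auto

lemma tup_finite_sum_approx:
  fixes n :: nat
  assumes "\<And>a. a < n \<Longrightarrow> u a \<in> l2" "e > 0"
  shows "\<exists>G. finite G \<and> (\<Sum>a<n. (l2norm (u a))^2) - e < (\<Sum>a<n. \<Sum>i\<in>G. (cmod (u a i))^2)"
  using assms
proof (induction n arbitrary: e)
  case 0
  then show ?case by auto
next
  case (Suc n)
  have "e/2 > 0" using Suc.prems by simp
  then obtain G where G: "finite G" "(\<Sum>a<n. (l2norm (u a))^2) - e/2 < (\<Sum>a<n. \<Sum>i\<in>G. (cmod (u a i))^2)"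
    using Suc.IH Suc.prems(1) by (metis less_SucI)
  obtain G' where G': "finite G'" "(l2norm (u n))^2 - e/2 < (\<Sum>i\<in>G'. (cmod (u n i))^2)"
    by (rule l2_finite_sum_approx[of "u n" "e/2"]) (use Suc.prems \<open>e/2 > 0\<close> in simp_all)
  have "(\<Sum>a<n. \<Sum>i\<in>G. (cmod (u a i))^2) \<le> (\<Sum>a<n. \<Sum>i\<in>G \<union> G'. (cmod (u a i))^2)"
    using G(1) G'(1) by (intro sum_mono sum_mono2) auto
  moreover have "(\<Sum>i\<in>G'. (cmod (u n i))^2) \<le> (\<Sum>i\<in>G \<union> G'. (cmod (u n i))^2)"
    using G(1) G'(1) by (intro sum_mono2) auto
  ultimately show ?case using G G' by (intro exI[of _ "G \<union> G'"]) simp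
qed

lemma tup_trunc_approx:
  assumes u: "u \<in> tup_l2 n" and e: "e > 0"
  obtains F0 where "finite F0"
    "\<And>F. finite F \<Longrightarrow> F0 \<subseteq> F \<Longrightarrow> tnorm n (\<lambda>a i. u a i - trunc F (u a) i) < e"
proof -
  have ul: "u a \<in> l2" if "a < n" for a using u that by (simp add: tup_l2_def)
  have "e^2 > 0" using e by simp
  then obtain F0 where F0: "finite F0"
      "(\<Sum>a<n. (l2norm (u a))^2) - e^2 < (\<Sum>a<n. \<Sum>i\<in>F0. (cmod (u a i))^2)"
    using tup_finite_sum_approx[of n u "e^2"] ul by blast
  have "tnorm n (\<lambda>a i. u a i - trunc F (u a) i) < e" if F: "finite F" "F0 \<subseteq> F" for F
  proof -
    have "(tnorm n (\<lambda>a i. u a i - trunc F (u a) i))^2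
        \<le> (\<Sum>a<n. (l2norm (u a))^2 - (\<Sum>i\<in>F. (cmod (u a i))^2))"
      unfolding tnorm_sq by (intro sum_mono l2norm_trunc_tail ul F) simp
    also have "\<dots> \<le> (\<Sum>a<n. (l2norm (u a))^2) - (\<Sum>a<n. \<Sum>i\<in>F0. (cmod (u a i))^2)"
      unfolding sum_subtractf using F by (intro diff_left_mono sum_mono sum_mono2) auto
    also have "\<dots> < e^2" using F0(2) by linarith
    finally show ?thesis using e by (simp add: power2_less_imp_less)
  qed
  with F0(1) show ?thesis by (rule that)
qed

lemma tnorm_tapply_le_truncated:
  assumes T: "\<And>a b. a < n \<Longrightarrow> b < n \<Longrightarrow> T a b \<in> bop"
    and K: "\<And>u. u \<in> tup_l2 n \<Longrightarrow> tnorm n (tapply n T u) \<le> K * tnorm n u"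
    and u: "u \<in> tup_l2 n" and F: "finite F"
  shows "tnorm n (tapply n T u)
      \<le> tnorm n (\<lambda>a. trunc F (tapply n T (\<lambda>b. trunc F (u b)) a))
        + K * tnorm n (\<lambda>b i. u b i - trunc F (u b) i)
        + tnorm n (\<lambda>a i. tapply n T u a i - trunc F (tapply n T u a) i)"
proof -
  let ?w = "tapply n T u" and ?D = "\<lambda>b i. u b i - trunc F (u b) i"
  let ?P = "\<lambda>a. trunc F (tapply n T (\<lambda>b. trunc F (u b)) a)"
  let ?Q = "\<lambda>a. trunc F (tapply n T ?D a)"
  let ?R = "\<lambda>a i. ?w a i - trunc F (?w a) i"
  have D: "?D \<in> tup_l2 n" by (rule tup_l2_diff[OF u tup_l2_trunc[OF F]])
  have w: "?w \<in> tup_l2 n" by (rule tapply_tup_l2[of n T, OF T u])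
  have TD: "tapply n T ?D \<in> tup_l2 n" by (rule tapply_tup_l2[of n T, OF T D])
  have decomp: "?w a i = ?P a i + ?Q a i + ?R a i" if "a < n" for a i
  proof -
    have "?w a = tapply n T (\<lambda>b i. trunc F (u b) i + ?D b i) a" by simp
    also have "\<dots> = (\<lambda>i. tapply n T (\<lambda>b. trunc F (u b)) a i + tapply n T ?D a i)"
      by (rule tapply_add[of n T, OF T tup_l2_trunc[OF F] D that])
    finally have "?w a i = tapply n T (\<lambda>b. trunc F (u b)) a i + tapply n T ?D a i" by simp
    then show ?thesis by (simp add: trunc_def)
  qed
  have "tnorm n ?w = tnorm n (\<lambda>a i. ?P a i + ?Q a i + ?R a i)"
    by (rule tnorm_cong, rule ext, rule decomp)
  also have "\<dots> \<le> tnorm n ?P + tnorm n ?Q + tnorm n ?R"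
  proof -
    have P: "?P \<in> tup_l2 n" and Q: "?Q \<in> tup_l2 n" using F by (simp_all add: tup_l2_trunc)
    have R: "?R \<in> tup_l2 n" using F by (simp add: tup_l2_diff[OF w] tup_l2_trunc)
    show ?thesis
      using tnorm_add_le[OF tup_l2_add[OF P Q] R] tnorm_add_le[OF P Q] by linarith
  qed
  also have "tnorm n ?Q \<le> K * tnorm n ?D"
    using tnorm_trunc_le[OF TD F] K[OF D] by linarith
  finally show ?thesis by linarith
qed

context os_embedding
begin

lemma tnorm_truncated_le_QS_bound:
  assumes hB: "\<And>k \<phi>. k \<ge> 1 \<Longrightarrow> \<phi> \<in> QS S k \<Longrightarrow> cmnorm (n*k) (amp k \<phi> X) \<le> B"
    and u: "u \<in> tup_l2 n" "tnorm n u \<le> 1" and F: "finite F" "F \<noteq> {}"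
  shows "tnorm n (\<lambda>a. trunc F (tapply n (\<lambda>a b. j (X a b)) (\<lambda>b. trunc F (u b)) a)) \<le> B"
proof -
  define k where "k = card F"
  have k: "k \<ge> 1" using F by (simp add: k_def Suc_le_eq card_gt_0_iff)
  obtain f where bij: "bij_betw f {..<k} F"
    using ex_bij_betw_nat_finite[OF F(1)] by (auto simp: k_def atLeast0LessThan)
  define v where "v r = u (r div k) (f (r mod k))" for r
  have lift: "lift_vec k f v = (\<lambda>b. trunc F (u b))"
  proof (intro ext)
    fix b i
    show "lift_vec k f v b i = trunc F (u b) i"
    proof (cases "i \<in> F")
      case True
      then obtain q where "q < k" "i = f q" using bij_betw_imp_surj_on[OF bij] by blast
      then show ?thesis using True lift_vec_at[OF bij] by (simp add: v_def trunc_def)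
    next
      case False
      then show ?thesis using lift_vec_outside[OF bij] by (simp add: trunc_def)
    qed
  qed
  have "cvnorm (n*k) v = tnorm n (\<lambda>b. trunc F (u b))"
    using tnorm_lift_vec[OF bij, of n v] unfolding lift by simp
  also have "\<dots> \<le> 1" using tnorm_trunc_le[OF u(1) F(1)] u(2) by linarith
  finally have v: "cvnorm (n*k) v \<le> 1" .
  have "tnorm n (\<lambda>a. trunc F (tapply n (\<lambda>a b. j (X a b)) (\<lambda>b. trunc F (u b)) a))
      = cvnorm (n*k) (cmapply (n*k) (amp k (compression j f) X) v)"
    using cvnorm_cmapply_amp_compression[OF bij os_embedding_axioms] lift by simp
  also have "\<dots> \<le> cmnorm (n*k) (amp k (compression j f) X)" by (rule cmnorm_upper[OF v])
  also have "\<dots> \<le> B" by (rule hB[OF k compression_QS[OF bij os_embedding_axioms]])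
  finally show ?thesis .
qed

lemma mnorm_le_QS_bound:
  assumes n: "n \<ge> 1"
    and hB: "\<And>k \<phi>. k \<ge> 1 \<Longrightarrow> \<phi> \<in> QS S k \<Longrightarrow> cmnorm (n*k) (amp k \<phi> X) \<le> B"
  shows "mnorm S n X \<le> B"
proof -
  let ?T = "\<lambda>a b. j (X a b)"
  have T: "?T a b \<in> bop" for a b by (rule bop)
  obtain K where K: "K \<ge> 0" "\<And>u. u \<in> tup_l2 n \<Longrightarrow> tnorm n (tapply n ?T u) \<le> K * tnorm n u"
    by (rule tapply_bounded[of n ?T, OF T]) blast
  have "bop_mnorm n ?T \<le> B"
  proof (rule bop_mnorm_least)
    fix u :: "nat \<Rightarrow> 'i \<Rightarrow> complex" assume u: "u \<in> tup_l2 n" "tnorm n u \<le> 1"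
    let ?w = "tapply n ?T u"
    show "tnorm n ?w \<le> B"
    proof (rule field_le_epsilon)
      fix e :: real assume e: "0 < e"
      have e': "e/2 > 0" "e / (2 * (K + 1)) > 0" using e K(1) by simp_all
      obtain F1 where F1: "finite F1"
          "\<And>F. finite F \<Longrightarrow> F1 \<subseteq> F \<Longrightarrow> tnorm n (\<lambda>a i. ?w a i - trunc F (?w a) i) < e/2"
        using tup_trunc_approx[OF tapply_tup_l2[of n ?T, OF T u(1)] e'(1)] by blast
      obtain F2 where F2: "finite F2"
          "\<And>F. finite F \<Longrightarrow> F2 \<subseteq> F \<Longrightarrow> tnorm n (\<lambda>a i. u a i - trunc F (u a) i) < e / (2 * (K + 1))"
        using tup_trunc_approx[OF u(1) e'(2)] by blast
      define F where "F = insert undefined (F1 \<union> F2)"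
      have F: "finite F" "F \<noteq> {}" "F1 \<subseteq> F" "F2 \<subseteq> F" using F1(1) F2(1) by (auto simp: F_def)
      have "K * tnorm n (\<lambda>a i. u a i - trunc F (u a) i) \<le> K * (e / (2 * (K + 1)))"
        using F2(2)[OF F(1,4)] K(1) by (intro mult_left_mono) auto
      also have "\<dots> \<le> e/2" using K(1) e by (simp add: field_simps)
      finally show "tnorm n ?w \<le> B + e"
        using tnorm_tapply_le_truncated[of n ?T K u F, OF T K(2) u(1) F(1)]
          tnorm_truncated_le_QS_bound[OF hB u F(1,2)] F1(2)[OF F(1,3)] by linarith
    qed
  qed
  then show ?thesis using mnorm_eq[OF n] by simp
qed

end

definition mat_fst :: "(nat \<Rightarrow> nat \<Rightarrow> 'a \<times> 'b) \<Rightarrow> nat \<Rightarrow> nat \<Rightarrow> 'a" where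
  "mat_fst X = (\<lambda>a b. fst (X a b))"

definition mat_snd :: "(nat \<Rightarrow> nat \<Rightarrow> 'a \<times> 'b) \<Rightarrow> nat \<Rightarrow> nat \<Rightarrow> 'b" where
  "mat_snd X = (\<lambda>a b. snd (X a b))"

definition coprod_states ::
    "('a::ab_group_add) mstruct \<Rightarrow> ('b::ab_group_add) mstruct
      \<Rightarrow> (nat \<times> ('a \<Rightarrow> nat \<Rightarrow> nat \<Rightarrow> complex) \<times> ('b \<Rightarrow> nat \<Rightarrow> nat \<Rightarrow> complex)) set" where
  "coprod_states S T = {(m, \<phi>, \<psi>). m \<ge> 1 \<and> \<phi> \<in> QS S m \<and> \<psi> \<in> QS T m}"

definition coprod_val ::
    "nat \<Rightarrow> (nat \<Rightarrow> nat \<Rightarrow> 'a \<times> 'b)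
      \<Rightarrow> nat \<times> ('a \<Rightarrow> nat \<Rightarrow> nat \<Rightarrow> complex) \<times> ('b \<Rightarrow> nat \<Rightarrow> nat \<Rightarrow> complex) \<Rightarrow> real" where
  "coprod_val n X t = (case t of (m, \<phi>, \<psi>) \<Rightarrow>
     cmnorm (n * m) (\<lambda>p q. amp m \<phi> (mat_fst X) p q + amp m \<psi> (mat_snd X) p q))"

lemma coprod_mnorm: "mnorm (coprod S T) n X = (SUP t\<in>coprod_states S T. coprod_val n X t)"
  unfolding coprod_def coprod_states_def coprod_val_def mat_fst_def mat_snd_def by simp

lemma coprod_mpos: "X \<in> mpos (coprod S T) n \<longleftrightarrow> mat_fst X \<in> mpos S n \<and> mat_snd X \<in> mpos T n"
  unfolding coprod_def mat_fst_def mat_snd_def by simp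

lemma coprod_msc: "msc (coprod S T) c (x, y) = (msc S c x, msc T c y)"
  unfolding coprod_def by simp

lemma coprod_val_le:
  assumes "n \<ge> 1" "t \<in> coprod_states S T"
  shows "coprod_val n X t \<le> mnorm S n (mat_fst X) + mnorm T n (mat_snd X)"
proof -
  obtain m \<phi> \<psi> where t: "t = (m, \<phi>, \<psi>)" "\<phi> \<in> QS S m" "\<psi> \<in> QS T m"
    using assms(2) unfolding coprod_states_def by blast
  have "coprod_val n X t \<le> cmnorm (n*m) (amp m \<phi> (mat_fst X)) + cmnorm (n*m) (amp m \<psi> (mat_snd X))"
    unfolding t coprod_val_def by (simp add: cmnorm_add_le)
  also have "\<dots> \<le> mnorm S n (mat_fst X) + mnorm T n (mat_snd X)"
    using QS_cmnorm_le[OF t(2) assms(1)] QS_cmnorm_le[OF t(3) assms(1)] by (rule add_mono)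
  finally show ?thesis .
qed

lemma coprod_mnorm_upper:
  assumes "n \<ge> 1" "m \<ge> 1" "\<phi> \<in> QS S m" "\<psi> \<in> QS T m"
  shows "cmnorm (n * m) (\<lambda>p q. amp m \<phi> (mat_fst X) p q + amp m \<psi> (mat_snd X) p q)
       \<le> mnorm (coprod S T) n X"
proof -
  have "bdd_above (coprod_val n X ` coprod_states S T)"
    using coprod_val_le[OF assms(1)] by (intro bdd_aboveI2) blast
  then have "coprod_val n X (m, \<phi>, \<psi>) \<le> (SUP t\<in>coprod_states S T. coprod_val n X t)"
    by (rule cSUP_upper[rotated]) (use assms in \<open>simp add: coprod_states_def\<close>)
  then show ?thesis by (simp add: coprod_val_def coprod_mnorm)
qed

context
  fixes S :: "('a::ab_group_add) mstruct" and T :: "('b::ab_group_add) mstruct"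
    and jS :: "'a \<Rightarrow> ('i \<Rightarrow> complex) \<Rightarrow> ('i \<Rightarrow> complex)"
    and jT :: "'b \<Rightarrow> ('j \<Rightarrow> complex) \<Rightarrow> ('j \<Rightarrow> complex)"
  assumes jS: "os_embedding S jS" and jT: "os_embedding T jT"
begin

lemma coprod_mnorm_le:
  assumes n: "n \<ge> 1"
  shows "mnorm (coprod S T) n X \<le> mnorm S n (mat_fst X) + mnorm T n (mat_snd X)"
  unfolding coprod_mnorm
proof (rule cSUP_least)
  show "coprod_states S T \<noteq> {}"
    using os_embedding.QS_zero[OF jS] os_embedding.QS_zero[OF jT] by (auto simp: coprod_states_def)
qed (rule coprod_val_le[OF n])

lemma coprod_mnorm_inl_le: "n \<ge> 1 \<Longrightarrow> mnorm (coprod S T) n (\<lambda>a b. (X a b, 0)) \<le> mnorm S n X"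
  using coprod_mnorm_le[of n "\<lambda>a b. (X a b, 0)"] os_embedding.mnorm_zero[OF jT]
  by (simp add: mat_fst_def mat_snd_def)

lemma coprod_mnorm_inr_le: "n \<ge> 1 \<Longrightarrow> mnorm (coprod S T) n (\<lambda>a b. (0, Y a b)) \<le> mnorm T n Y"
  using coprod_mnorm_le[of n "\<lambda>a b. (0, Y a b)"] os_embedding.mnorm_zero[OF jS]
  by (simp add: mat_fst_def mat_snd_def)

text \<open>The converse inequalities rest on the quasistates of \<open>S\<close> being norming; pair each of
  them with the zero quasistate of \<open>T\<close>.\<close>

lemma mnorm_fst_le_coprod: "n \<ge> 1 \<Longrightarrow> mnorm S n (mat_fst X) \<le> mnorm (coprod S T) n X"
  using coprod_mnorm_upper[OF _ _ _ os_embedding.QS_zero[OF jT], of n _ _ S X]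
  by (intro os_embedding.mnorm_le_QS_bound[OF jS]) (simp_all add: amp_def)

lemma mnorm_snd_le_coprod: "n \<ge> 1 \<Longrightarrow> mnorm T n (mat_snd X) \<le> mnorm (coprod S T) n X"
  using coprod_mnorm_upper[OF _ _ os_embedding.QS_zero[OF jS], of n _ _ T X]
  by (intro os_embedding.mnorm_le_QS_bound[OF jT]) (simp_all add: amp_def)

end

lemma dual_vals_iff:
  "y \<in> dual_vals S n F \<longleftrightarrow>
     (\<exists>m X. y = cmnorm (m * n) (amp n (\<lambda>x a b. F a b x) X) \<and> m \<ge> 1 \<and> mnorm S m X \<le> 1)"
  unfolding dual_vals_def by blast

lemma dual_mnorm_upper:
  assumes "dual_mat S n F" "m \<ge> 1" "mnorm S m X \<le> 1"
  shows "cmnorm (m * n) (amp n (\<lambda>x a b. F a b x) X) \<le> dual_mnorm S n F"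
  unfolding dual_mnorm_def
  using assms by (intro cSup_upper) (auto simp: dual_mat_def dual_vals_iff)

lemma (in os_embedding) dual_vals_nonempty: "dual_vals S n F \<noteq> {}"
proof -
  have "cmnorm (1 * n) (amp n (\<lambda>x a b. F a b x) (\<lambda>a b. 0)) \<in> dual_vals S n F"
    unfolding dual_vals_iff by (intro exI[of _ 1] exI[of _ "\<lambda>a b. 0"]) (simp add: mnorm_zero)
  then show ?thesis by blast
qed

lemma dual_mnorm_least:
  assumes "dual_vals S n F \<noteq> {}"
    and "\<And>m X. m \<ge> 1 \<Longrightarrow> mnorm S m X \<le> 1 \<Longrightarrow> cmnorm (m * n) (amp n (\<lambda>x a b. F a b x) X) \<le> B"
  shows "dual_mnorm S n F \<le> B"
  unfolding dual_mnorm_def using assms(1)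
  by (rule cSup_least) (use assms(2) in \<open>auto simp: dual_vals_iff\<close>)

lemma (in os_embedding) dual_mnorm_nonneg:
  assumes "dual_mat S n F"
  shows "0 \<le> dual_mnorm S n F"
proof -
  have "cmnorm (1 * n) (amp n (\<lambda>x a b. F a b x) (\<lambda>a b. 0)) \<le> dual_mnorm S n F"
    by (rule dual_mnorm_upper[OF assms]) (simp_all add: mnorm_zero)
  then show ?thesis using cmnorm_nonneg[of "1 * n" "amp n (\<lambda>x a b. F a b x) (\<lambda>a b. 0)"] by linarith
qed

lemma dual_mat_entry:
  assumes F: "dual_mat S n F" and ab: "a < n" "b < n"
  shows "dual_mat S 1 (\<lambda>_ _. F a b)"
proof -
  obtain M where M: "\<And>y. y \<in> dual_vals S n F \<Longrightarrow> y \<le> M"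
    using F unfolding dual_mat_def bdd_above_def by blast
  have "y \<le> M" if y: "y \<in> dual_vals S 1 (\<lambda>_ _. F a b)" for y
  proof -
    obtain m X where y: "y = cmnorm (m * 1) (amp 1 (\<lambda>x _ _. F a b x) X)" and mX: "m \<ge> 1" "mnorm S m X \<le> 1"
      using y unfolding dual_vals_iff by blast
    have "amp 1 (\<lambda>x _ _. F a b x) X = (\<lambda>p q. amp n (\<lambda>x a b. F a b x) X (p*n+a) (q*n+b))"
      using ab by (simp add: amp_def)
    then have "y \<le> cmnorm (m * n) (amp n (\<lambda>x a b. F a b x) X)"
      using y cmnorm_block_entry_le[OF ab] by simp
    also have "\<dots> \<le> M" using mX by (intro M) (auto simp: dual_vals_iff)
    finally show ?thesis .
  qed
  then show ?thesis using F ab unfolding dual_mat_def bdd_above_def by auto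
qed

lemma amp_comp: "amp n (\<lambda>x a b. F a b (\<iota> x)) X = amp n (\<lambda>x a b. F a b x) (\<lambda>a b. \<iota> (X a b))"
  by (simp add: amp_def)

context
  fixes S :: "('a::ab_group_add) mstruct" and C :: "('c::ab_group_add) mstruct" and \<iota> :: "'a \<Rightarrow> 'c"
  assumes contractive: "\<And>m X. m \<ge> 1 \<Longrightarrow> mnorm C m (\<lambda>a b. \<iota> (X a b)) \<le> mnorm S m X"
begin

lemma dual_vals_comp_subset: "dual_vals S n (\<lambda>a b x. F a b (\<iota> x)) \<subseteq> dual_vals C n F"
proof
  fix y assume "y \<in> dual_vals S n (\<lambda>a b x. F a b (\<iota> x))"
  then obtain m X where y: "y = cmnorm (m * n) (amp n (\<lambda>x a b. F a b x) (\<lambda>a b. \<iota> (X a b)))"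
      and mX: "m \<ge> 1" "mnorm S m X \<le> 1"
    unfolding dual_vals_iff amp_comp by blast
  moreover have "mnorm C m (\<lambda>a b. \<iota> (X a b)) \<le> 1" using contractive[OF mX(1), of X] mX(2) by linarith
  ultimately show "y \<in> dual_vals C n F" unfolding dual_vals_iff by blast
qed

lemma dual_mat_comp:
  assumes add: "\<And>x y. \<iota> (x + y) = \<iota> x + \<iota> y" and scale: "\<And>c x. \<iota> (msc S c x) = msc C c (\<iota> x)"
    and F: "dual_mat C n F"
  shows "dual_mat S n (\<lambda>a b x. F a b (\<iota> x))"
  using F bdd_above_mono[OF _ dual_vals_comp_subset]
  unfolding dual_mat_def clinfun_def by (simp add: add scale)

lemma dual_mnorm_comp_le:
  assumes "os_embedding S j" and F: "dual_mat C n F"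
  shows "dual_mnorm S n (\<lambda>a b x. F a b (\<iota> x)) \<le> dual_mnorm C n F"
  unfolding dual_mnorm_def
  using F os_embedding.dual_vals_nonempty[OF assms(1)] dual_vals_comp_subset
  by (intro cSup_subset_mono) (auto simp: dual_mat_def)

end

lemma dual_mpos_comp:
  assumes "\<And>m X. m \<ge> 1 \<Longrightarrow> X \<in> mpos S m \<Longrightarrow> (\<lambda>a b. \<iota> (X a b)) \<in> mpos C m"
    and "dual_mpos C n F"
  shows "dual_mpos S n (\<lambda>a b x. F a b (\<iota> x))"
  unfolding dual_mpos_def amp_comp
proof (intro allI impI ballI)
  fix m X assume "1 \<le> m" "X \<in> mpos S m"
  then show "cmpos (m * n) (amp n (\<lambda>x a b. F a b x) (\<lambda>a b. \<iota> (X a b)))"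
    using assms(2)[unfolded dual_mpos_def] assms(1) by simp
qed

section \<open>The dual of the coproduct\<close>

definition dual_fst :: "(nat \<Rightarrow> nat \<Rightarrow> 'a \<times> 'b::zero \<Rightarrow> complex) \<Rightarrow> nat \<Rightarrow> nat \<Rightarrow> 'a \<Rightarrow> complex" where
  "dual_fst F = (\<lambda>a b x. F a b (x, 0))"

definition dual_snd :: "(nat \<Rightarrow> nat \<Rightarrow> 'a::zero \<times> 'b \<Rightarrow> complex) \<Rightarrow> nat \<Rightarrow> nat \<Rightarrow> 'b \<Rightarrow> complex" where
  "dual_snd F = (\<lambda>a b y. F a b (0, y))"

lemma amp_coprod_split:
  assumes F: "dual_mat (coprod S T) n F" and n: "n \<ge> 1"
  shows "amp n (\<lambda>x a b. F a b x) X
       = (\<lambda>p q. amp n (\<lambda>x a b. dual_fst F a b x) (mat_fst X) p q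
              + amp n (\<lambda>y a b. dual_snd F a b y) (mat_snd X) p q)"
proof (intro ext)
  fix p q
  let ?f = "F (p mod n) (q mod n)" and ?x = "X (p div n) (q div n)"
  have "clinfun (coprod S T) ?f" using F n unfolding dual_mat_def by simp
  then have "?f ((fst ?x, 0) + (0, snd ?x)) = ?f (fst ?x, 0) + ?f (0, snd ?x)"
    unfolding clinfun_def by blast
  then have "?f ?x = ?f (fst ?x, 0) + ?f (0, snd ?x)" by simp
  then show "amp n (\<lambda>x a b. F a b x) X p q
      = amp n (\<lambda>x a b. dual_fst F a b x) (mat_fst X) p q + amp n (\<lambda>y a b. dual_snd F a b y) (mat_snd X) p q"
    by (simp add: amp_def dual_fst_def dual_snd_def mat_fst_def mat_snd_def)
qed

context
  fixes S :: "('a::ab_group_add) mstruct" and T :: "('b::ab_group_add) mstruct"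
    and jS :: "'a \<Rightarrow> ('i \<Rightarrow> complex) \<Rightarrow> ('i \<Rightarrow> complex)"
    and jT :: "'b \<Rightarrow> ('j \<Rightarrow> complex) \<Rightarrow> ('j \<Rightarrow> complex)"
  assumes jS: "os_embedding S jS" and jT: "os_embedding T jT"
begin

lemma dual_mat_fst: "dual_mat (coprod S T) n F \<Longrightarrow> dual_mat S n (dual_fst F)"
  unfolding dual_fst_def
  by (rule dual_mat_comp[where S=S and C="coprod S T" and \<iota>="\<lambda>x. (x, 0)", OF coprod_mnorm_inl_le[OF jS jT]])
     (simp_all add: coprod_msc os_embedding.msc_zero[OF jT])

lemma dual_mat_snd: "dual_mat (coprod S T) n F \<Longrightarrow> dual_mat T n (dual_snd F)"
  unfolding dual_snd_def
  by (rule dual_mat_comp[where S=T and C="coprod S T" and \<iota>="\<lambda>y. (0, y)", OF coprod_mnorm_inr_le[OF jS jT]])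
     (simp_all add: coprod_msc os_embedding.msc_zero[OF jS])

lemma dual_mnorm_fst_le: "dual_mat (coprod S T) n F \<Longrightarrow> dual_mnorm S n (dual_fst F) \<le> dual_mnorm (coprod S T) n F"
  unfolding dual_fst_def
  by (rule dual_mnorm_comp_le[where S=S and C="coprod S T" and \<iota>="\<lambda>x. (x, 0)", OF coprod_mnorm_inl_le[OF jS jT] jS])

lemma dual_mnorm_snd_le: "dual_mat (coprod S T) n F \<Longrightarrow> dual_mnorm T n (dual_snd F) \<le> dual_mnorm (coprod S T) n F"
  unfolding dual_snd_def
  by (rule dual_mnorm_comp_le[where S=T and C="coprod S T" and \<iota>="\<lambda>y. (0, y)", OF coprod_mnorm_inr_le[OF jS jT] jT])

lemma dual_mnorm_coprod_le:
  assumes F: "dual_mat (coprod S T) n F" and n: "n \<ge> 1"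
  shows "dual_mnorm (coprod S T) n F \<le> dual_mnorm S n (dual_fst F) + dual_mnorm T n (dual_snd F)"
proof (rule dual_mnorm_least)
  have "dual_vals S n (dual_fst F) \<subseteq> dual_vals (coprod S T) n F"
    unfolding dual_fst_def
    by (rule dual_vals_comp_subset[where S=S and C="coprod S T" and \<iota>="\<lambda>x. (x, 0)", OF coprod_mnorm_inl_le[OF jS jT]])
  then show "dual_vals (coprod S T) n F \<noteq> {}"
    using os_embedding.dual_vals_nonempty[OF jS, of n "dual_fst F"] by blast
next
  fix m X assume m: "m \<ge> 1" and X: "mnorm (coprod S T) m X \<le> 1"
  have XS: "mnorm S m (mat_fst X) \<le> 1" and XT: "mnorm T m (mat_snd X) \<le> 1"
    using mnorm_fst_le_coprod[OF jS jT m, of X] mnorm_snd_le_coprod[OF jS jT m, of X] X by linarith+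
  have "cmnorm (m * n) (amp n (\<lambda>x a b. dual_fst F a b x) (mat_fst X)) \<le> dual_mnorm S n (dual_fst F)"
      "cmnorm (m * n) (amp n (\<lambda>y a b. dual_snd F a b y) (mat_snd X)) \<le> dual_mnorm T n (dual_snd F)"
    by (rule dual_mnorm_upper[OF dual_mat_fst[OF F] m XS], rule dual_mnorm_upper[OF dual_mat_snd[OF F] m XT])
  then show "cmnorm (m * n) (amp n (\<lambda>x a b. F a b x) X) \<le> dual_mnorm S n (dual_fst F) + dual_mnorm T n (dual_snd F)"
    unfolding amp_coprod_split[OF F n]
    using cmnorm_add_le[of "m * n" "amp n (\<lambda>x a b. dual_fst F a b x) (mat_fst X)"
        "amp n (\<lambda>y a b. dual_snd F a b y) (mat_snd X)"] by linarith
qed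

lemma dual_mpos_coprod_iff:
  assumes F: "dual_mat (coprod S T) n F" and n: "n \<ge> 1"
  shows "dual_mpos (coprod S T) n F \<longleftrightarrow> dual_mpos S n (dual_fst F) \<and> dual_mpos T n (dual_snd F)"
proof
  assume "dual_mpos (coprod S T) n F"
  moreover have "(\<lambda>a b. (X a b, 0)) \<in> mpos (coprod S T) m" if "m \<ge> 1" "X \<in> mpos S m" for m X
    using that os_embedding.mpos_zero[OF jT] by (simp add: coprod_mpos mat_fst_def mat_snd_def)
  moreover have "(\<lambda>a b. (0, X a b)) \<in> mpos (coprod S T) m" if "m \<ge> 1" "X \<in> mpos T m" for m X
    using that os_embedding.mpos_zero[OF jS] by (simp add: coprod_mpos mat_fst_def mat_snd_def)
  ultimately show "dual_mpos S n (dual_fst F) \<and> dual_mpos T n (dual_snd F)"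
    unfolding dual_fst_def dual_snd_def
    by (intro conjI dual_mpos_comp[where S=S and C="coprod S T" and \<iota>="\<lambda>x. (x, 0)"] dual_mpos_comp[where S=T and C="coprod S T" and \<iota>="\<lambda>y. (0, y)"])
next
  assume pos: "dual_mpos S n (dual_fst F) \<and> dual_mpos T n (dual_snd F)"
  show "dual_mpos (coprod S T) n F"
    unfolding dual_mpos_def
  proof (intro allI impI ballI)
    fix m X assume m: "1 \<le> m" and "X \<in> mpos (coprod S T) m"
    then have "mat_fst X \<in> mpos S m" "mat_snd X \<in> mpos T m" by (simp_all add: coprod_mpos)
    with pos m show "cmpos (m * n) (amp n (\<lambda>x a b. F a b x) X)"
      unfolding amp_coprod_split[OF F n] dual_mpos_def by (intro cmpos_add) simp_all
  qed
qed

end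

section \<open>Block diagonal operators on \<open>l2(h + k)\<close>\<close>

definition block_diag :: "(('h \<Rightarrow> complex) \<Rightarrow> ('h \<Rightarrow> complex)) \<Rightarrow> (('k \<Rightarrow> complex) \<Rightarrow> ('k \<Rightarrow> complex))
    \<Rightarrow> ('h + 'k \<Rightarrow> complex) \<Rightarrow> ('h + 'k \<Rightarrow> complex)" where
  "block_diag A B = (\<lambda>x. if x \<in> l2 then case_sum (A (x \<circ> Inl)) (B (x \<circ> Inr)) else (\<lambda>i. 0))"

lemma block_diag_apply: "x \<in> l2 \<Longrightarrow> block_diag A B x = case_sum (A (x \<circ> Inl)) (B (x \<circ> Inr))"
  by (simp add: block_diag_def)

lemma block_diag_add:
  "block_diag (\<lambda>u i. A u i + A' u i) (\<lambda>u i. B u i + B' u i)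
     = (\<lambda>u i. block_diag A B u i + block_diag A' B' u i)"
  by (intro ext) (simp add: block_diag_def split: sum.split)

lemma block_diag_scale: "block_diag (\<lambda>u i. c * A u i) (\<lambda>u i. c * B u i) = (\<lambda>u i. c * block_diag A B u i)"
  by (intro ext) (simp add: block_diag_def split: sum.split)

lemma l2norm_comp_Inl_Inr:
  assumes "x \<in> l2"
  shows "(l2norm x)^2 = (l2norm (x \<circ> Inl))^2 + (l2norm (x \<circ> Inr))^2"
  using l2norm_case_sum[of "x \<circ> Inl" "x \<circ> Inr"] assms l2_iff_comp_Inl_Inr[of x]
  by (simp only: case_sum_expand_Inr_pointfree)

lemma l2norm_comp_Inl_le: "x \<in> l2 \<Longrightarrow> l2norm (x \<circ> Inl) \<le> l2norm x"
  and l2norm_comp_Inr_le: "x \<in> l2 \<Longrightarrow> l2norm (x \<circ> Inr) \<le> l2norm x"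
  using l2norm_comp_Inl_Inr l2norm_nonneg by (smt (verit) power2_le_imp_le zero_le_power2)+

lemma l2norm_case_sum_le:
  assumes "x \<in> l2" "y \<in> l2"
  shows "l2norm (case_sum x y) \<le> l2norm x + l2norm y"
proof -
  have "l2norm (case_sum x y) = sqrt ((l2norm x)^2 + (l2norm y)^2)"
    using l2norm_case_sum[OF assms] by (intro real_sqrt_unique[symmetric]) (simp_all add: l2norm_nonneg)
  also have "\<dots> \<le> l2norm x + l2norm y"
    using sqrt_add_le_add_sqrt[of "(l2norm x)^2" "(l2norm y)^2"] by (simp add: l2norm_nonneg)
  finally show ?thesis .
qed

lemma block_diag_bop:
  assumes A: "A \<in> bop" and B: "B \<in> bop"
  shows "block_diag A B \<in> bop"
proof -
  obtain KA where KA: "KA \<ge> 0" "\<And>x. x \<in> l2 \<Longrightarrow> l2norm (A x) \<le> KA * l2norm x"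
    by (rule bop_bounded[OF A]) blast
  obtain KB where KB: "KB \<ge> 0" "\<And>x. x \<in> l2 \<Longrightarrow> l2norm (B x) \<le> KB * l2norm x"
    by (rule bop_bounded[OF B]) blast
  have parts: "x \<circ> Inl \<in> l2" "x \<circ> Inr \<in> l2" if "x \<in> l2" for x :: "'a + 'b \<Rightarrow> complex"
    using that l2_iff_comp_Inl_Inr by blast+
  have "l2norm (block_diag A B x) \<le> (KA + KB) * l2norm x" if x: "x \<in> l2" for x
  proof -
    have "l2norm (A (x \<circ> Inl)) \<le> KA * l2norm x"
      using KA(2)[OF parts(1)[OF x]] mult_left_mono[OF l2norm_comp_Inl_le[OF x] KA(1)] by linarith
    moreover have "l2norm (B (x \<circ> Inr)) \<le> KB * l2norm x"
      using KB(2)[OF parts(2)[OF x]] mult_left_mono[OF l2norm_comp_Inr_le[OF x] KB(1)] by linarith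
    moreover have "l2norm (block_diag A B x) \<le> l2norm (A (x \<circ> Inl)) + l2norm (B (x \<circ> Inr))"
      unfolding block_diag_apply[OF x]
      by (rule l2norm_case_sum_le[OF bop_l2[OF A parts(1)[OF x]] bop_l2[OF B parts(2)[OF x]]])
    ultimately show ?thesis by (simp add: distrib_right)
  qed
  moreover have "block_diag A B x \<in> l2" if "x \<in> l2" for x
    using that parts[OF that] bop_l2[OF A] bop_l2[OF B] by (simp add: block_diag_apply l2_case_sum)
  moreover have "block_diag A B (\<lambda>i. x i + y i) = (\<lambda>i. block_diag A B x i + block_diag A B y i)"
    if "x \<in> l2" "y \<in> l2" for x y
    using that parts[OF that(1)] parts[OF that(2)] l2_add(1)[OF that] bop_add[OF A] bop_add[OF B]
    by (simp add: block_diag_apply o_def fun_eq_iff split: sum.split)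
  moreover have "block_diag A B (\<lambda>i. c * x i) = (\<lambda>i. c * block_diag A B x i)" if "x \<in> l2" for c x
    using that parts[OF that] l2_scale(1)[OF that] bop_scale[OF A] bop_scale[OF B]
    by (simp add: block_diag_apply o_def fun_eq_iff split: sum.split)
  ultimately show ?thesis unfolding bop_def by (auto simp: block_diag_def)
qed

definition tup_left :: "(nat \<Rightarrow> 'h + 'k \<Rightarrow> complex) \<Rightarrow> nat \<Rightarrow> 'h \<Rightarrow> complex" where
  "tup_left u = (\<lambda>b. u b \<circ> Inl)"

definition tup_right :: "(nat \<Rightarrow> 'h + 'k \<Rightarrow> complex) \<Rightarrow> nat \<Rightarrow> 'k \<Rightarrow> complex" where
  "tup_right u = (\<lambda>b. u b \<circ> Inr)"

definition tup_inl :: "(nat \<Rightarrow> 'h \<Rightarrow> complex) \<Rightarrow> nat \<Rightarrow> 'h + 'k \<Rightarrow> complex" where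
  "tup_inl u = (\<lambda>b. case_sum (u b) (\<lambda>k. 0))"

definition tup_inr :: "(nat \<Rightarrow> 'k \<Rightarrow> complex) \<Rightarrow> nat \<Rightarrow> 'h + 'k \<Rightarrow> complex" where
  "tup_inr u = (\<lambda>b. case_sum (\<lambda>h. 0) (u b))"

lemma tup_left_right_eta: "(\<lambda>a. case_sum (tup_left u a) (tup_right u a)) = u"
  unfolding tup_left_def tup_right_def by (simp add: case_sum_expand_Inr_pointfree)

lemma tup_left_inl: "tup_left (tup_inl u) = u" "tup_right (tup_inl u) = (\<lambda>b k. 0)"
  unfolding tup_left_def tup_right_def tup_inl_def by (auto simp: o_def)

lemma tup_right_inr: "tup_left (tup_inr u) = (\<lambda>b h. 0)" "tup_right (tup_inr u) = u"
  unfolding tup_left_def tup_right_def tup_inr_def by (auto simp: o_def)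

lemma tup_l2_left_right: "u \<in> tup_l2 n \<Longrightarrow> tup_left u \<in> tup_l2 n \<and> tup_right u \<in> tup_l2 n"
  unfolding tup_l2_def tup_left_def tup_right_def using l2_iff_comp_Inl_Inr by blast

lemma tup_l2_inl: "u \<in> tup_l2 n \<Longrightarrow> tup_inl u \<in> tup_l2 n"
  unfolding tup_l2_def tup_inl_def by (simp add: l2_case_sum l2_zero)

lemma tup_l2_inr: "u \<in> tup_l2 n \<Longrightarrow> tup_inr u \<in> tup_l2 n"
  unfolding tup_l2_def tup_inr_def by (simp add: l2_case_sum l2_zero)

lemma tnorm_case_sum:
  assumes "L \<in> tup_l2 n" "R \<in> tup_l2 n"
  shows "(tnorm n (\<lambda>a. case_sum (L a) (R a)))^2 = (tnorm n L)^2 + (tnorm n R)^2"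
  unfolding tnorm_sq using assms
  by (simp add: sum.distrib[symmetric] tup_l2_def l2norm_case_sum)

lemma tinner_case_sum:
  assumes "L \<in> tup_l2 n" "R \<in> tup_l2 n" "L' \<in> tup_l2 n" "R' \<in> tup_l2 n"
  shows "tinner n (\<lambda>a. case_sum (L a) (R a)) (\<lambda>a. case_sum (L' a) (R' a)) = tinner n L L' + tinner n R R'"
  unfolding tinner_def using assms
  by (simp add: sum.distrib[symmetric] tup_l2_def l2inner_case_sum)

lemma tnorm_left_right:
  assumes "u \<in> tup_l2 n"
  shows "(tnorm n u)^2 = (tnorm n (tup_left u))^2 + (tnorm n (tup_right u))^2"
  using tnorm_case_sum[of "tup_left u" n "tup_right u"] tup_l2_left_right[OF assms]
  by (simp add: tup_left_right_eta)

lemma tnorm_inl: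
  assumes "u \<in> tup_l2 n"
  shows "tnorm n (tup_inl u) = tnorm n u"
proof -
  have "(tnorm n (tup_inl u))^2 = (tnorm n u)^2"
    using tnorm_left_right[OF tup_l2_inl[OF assms]] by (simp add: tup_left_inl tup_l2_zero)
  then show ?thesis by (simp add: tnorm_nonneg power2_eq_iff_nonneg)
qed

lemma tnorm_inr:
  assumes "u \<in> tup_l2 n"
  shows "tnorm n (tup_inr u) = tnorm n u"
proof -
  have "(tnorm n (tup_inr u))^2 = (tnorm n u)^2"
    using tnorm_left_right[OF tup_l2_inr[OF assms]] by (simp add: tup_right_inr tup_l2_zero)
  then show ?thesis by (simp add: tnorm_nonneg power2_eq_iff_nonneg)
qed

lemma tapply_block_diag:
  assumes "u \<in> tup_l2 n"
  shows "tapply n (\<lambda>a b. block_diag (A a b) (B a b)) u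
       = (\<lambda>a. case_sum (tapply n A (tup_left u) a) (tapply n B (tup_right u) a))"
proof (intro ext)
  fix a i
  have "tapply n (\<lambda>a b. block_diag (A a b) (B a b)) u a i
      = (\<Sum>b<n. case_sum (A a b (u b \<circ> Inl)) (B a b (u b \<circ> Inr)) i)"
    unfolding tapply_def using assms by (intro sum.cong) (simp_all add: block_diag_apply tup_l2_def)
  also have "\<dots> = case_sum (tapply n A (tup_left u) a) (tapply n B (tup_right u) a) i"
    by (cases i) (simp_all add: tapply_def tup_left_def tup_right_def)
  finally show "tapply n (\<lambda>a b. block_diag (A a b) (B a b)) u a i
      = case_sum (tapply n A (tup_left u) a) (tapply n B (tup_right u) a) i" .
qed

context
  fixes n :: nat and A :: "nat \<Rightarrow> nat \<Rightarrow> ('h \<Rightarrow> complex) \<Rightarrow> ('h \<Rightarrow> complex)"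
    and B :: "nat \<Rightarrow> nat \<Rightarrow> ('k \<Rightarrow> complex) \<Rightarrow> ('k \<Rightarrow> complex)"
  assumes A: "\<And>a b. a < n \<Longrightarrow> b < n \<Longrightarrow> A a b \<in> bop"
    and B: "\<And>a b. a < n \<Longrightarrow> b < n \<Longrightarrow> B a b \<in> bop"
begin

lemma block_diag_entries_bop: "a < n \<Longrightarrow> b < n \<Longrightarrow> block_diag (A a b) (B a b) \<in> bop"
  by (intro block_diag_bop A B)

lemma tnorm_tapply_block_diag:
  assumes u: "u \<in> tup_l2 n"
  shows "(tnorm n (tapply n (\<lambda>a b. block_diag (A a b) (B a b)) u))^2
       = (tnorm n (tapply n A (tup_left u)))^2 + (tnorm n (tapply n B (tup_right u)))^2"
  unfolding tapply_block_diag[OF u] using tup_l2_left_right[OF u]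
  by (intro tnorm_case_sum tapply_tup_l2[of n A] tapply_tup_l2[of n B] A B) simp_all

lemma tinner_tapply_block_diag:
  assumes u: "u \<in> tup_l2 n"
  shows "tinner n (tapply n (\<lambda>a b. block_diag (A a b) (B a b)) u) u
       = tinner n (tapply n A (tup_left u)) (tup_left u) + tinner n (tapply n B (tup_right u)) (tup_right u)"
proof -
  have lr: "tup_left u \<in> tup_l2 n" "tup_right u \<in> tup_l2 n" using tup_l2_left_right[OF u] by simp_all
  have "tinner n (tapply n (\<lambda>a b. block_diag (A a b) (B a b)) u) (\<lambda>a. case_sum (tup_left u a) (tup_right u a))
      = tinner n (tapply n A (tup_left u)) (tup_left u) + tinner n (tapply n B (tup_right u)) (tup_right u)"
    unfolding tapply_block_diag[OF u]
    by (rule tinner_case_sum[OF tapply_tup_l2[of n A, OF A lr(1)] tapply_tup_l2[of n B, OF B lr(2)] lr])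
  then show ?thesis by (simp only: tup_left_right_eta)
qed

lemma tinner_tapply_block_diag_inl:
  assumes "u \<in> tup_l2 n"
  shows "tinner n (tapply n (\<lambda>a b. block_diag (A a b) (B a b)) (tup_inl u)) (tup_inl u)
       = tinner n (tapply n A u) u"
  using tinner_tapply_block_diag[OF tup_l2_inl[OF assms]] by (simp add: tup_left_inl tinner_def l2inner_def)

lemma tinner_tapply_block_diag_inr:
  assumes "u \<in> tup_l2 n"
  shows "tinner n (tapply n (\<lambda>a b. block_diag (A a b) (B a b)) (tup_inr u)) (tup_inr u)
       = tinner n (tapply n B u) u"
  using tinner_tapply_block_diag[OF tup_l2_inr[OF assms]] by (simp add: tup_right_inr tinner_def l2inner_def)

lemma bop_mnorm_block_diag_le:
  "bop_mnorm n (\<lambda>a b. block_diag (A a b) (B a b)) \<le> bop_mnorm n A + bop_mnorm n B"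
proof (rule bop_mnorm_least)
  fix u :: "nat \<Rightarrow> 'h + 'k \<Rightarrow> complex" assume u: "u \<in> tup_l2 n" "tnorm n u \<le> 1"
  have lr: "tup_left u \<in> tup_l2 n" "tup_right u \<in> tup_l2 n" using tup_l2_left_right[OF u(1)] by simp_all
  have "(tnorm n u)^2 \<le> 1" by (rule power_le_one[OF tnorm_nonneg u(2)])
  then have "(tnorm n (tup_left u))^2 + (tnorm n (tup_right u))^2 \<le> 1"
    using tnorm_left_right[OF u(1)] by linarith
  then have "(tnorm n (tup_left u))^2 \<le> 1" "(tnorm n (tup_right u))^2 \<le> 1"
    using zero_le_power2[of "tnorm n (tup_left u)"] zero_le_power2[of "tnorm n (tup_right u)"]
    by linarith+
  then have "tnorm n (tup_left u) \<le> 1" "tnorm n (tup_right u) \<le> 1"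
    by (simp_all add: power_le_one_iff tnorm_nonneg)
  then have a: "tnorm n (tapply n A (tup_left u)) \<le> bop_mnorm n A"
    and b: "tnorm n (tapply n B (tup_right u)) \<le> bop_mnorm n B"
    using bop_mnorm_upper[of n A, OF A lr(1)] bop_mnorm_upper[of n B, OF B lr(2)] by simp_all
  have "tnorm n (tapply n (\<lambda>a b. block_diag (A a b) (B a b)) u)
      = sqrt ((tnorm n (tapply n A (tup_left u)))^2 + (tnorm n (tapply n B (tup_right u)))^2)"
    using tnorm_tapply_block_diag[OF u(1)] by (intro real_sqrt_unique[symmetric]) (simp_all add: tnorm_nonneg)
  also have "\<dots> \<le> tnorm n (tapply n A (tup_left u)) + tnorm n (tapply n B (tup_right u))"
    using sqrt_add_le_add_sqrt[of "(tnorm n (tapply n A (tup_left u)))^2" "(tnorm n (tapply n B (tup_right u)))^2"]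
    by (simp add: tnorm_nonneg)
  finally show "tnorm n (tapply n (\<lambda>a b. block_diag (A a b) (B a b)) u) \<le> bop_mnorm n A + bop_mnorm n B"
    using a b by linarith
qed

lemma bop_mnorm_le_block_diag_left: "bop_mnorm n A \<le> bop_mnorm n (\<lambda>a b. block_diag (A a b) (B a b))"
proof (rule bop_mnorm_least)
  fix u :: "nat \<Rightarrow> 'h \<Rightarrow> complex" assume u: "u \<in> tup_l2 n" "tnorm n u \<le> 1"
  let ?v = "tup_inl u :: nat \<Rightarrow> 'h + 'k \<Rightarrow> complex"
  have "(tnorm n (tapply n A u))^2 = (tnorm n (tapply n (\<lambda>a b. block_diag (A a b) (B a b)) ?v))^2"
    using tnorm_tapply_block_diag[OF tup_l2_inl[OF u(1)]] tapply_zero[of n B, OF B]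
    by (simp add: tup_left_inl)
  then have "tnorm n (tapply n A u) = tnorm n (tapply n (\<lambda>a b. block_diag (A a b) (B a b)) ?v)"
    by (simp add: tnorm_nonneg power2_eq_iff_nonneg)
  also have "\<dots> \<le> bop_mnorm n (\<lambda>a b. block_diag (A a b) (B a b))"
    using u by (intro bop_mnorm_upper block_diag_entries_bop tup_l2_inl) (simp_all add: tnorm_inl)
  finally show "tnorm n (tapply n A u) \<le> bop_mnorm n (\<lambda>a b. block_diag (A a b) (B a b))" .
qed

lemma bop_mnorm_le_block_diag_right: "bop_mnorm n B \<le> bop_mnorm n (\<lambda>a b. block_diag (A a b) (B a b))"
proof (rule bop_mnorm_least)
  fix u :: "nat \<Rightarrow> 'k \<Rightarrow> complex" assume u: "u \<in> tup_l2 n" "tnorm n u \<le> 1"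
  let ?v = "tup_inr u :: nat \<Rightarrow> 'h + 'k \<Rightarrow> complex"
  have "(tnorm n (tapply n B u))^2 = (tnorm n (tapply n (\<lambda>a b. block_diag (A a b) (B a b)) ?v))^2"
    using tnorm_tapply_block_diag[OF tup_l2_inr[OF u(1)]] tapply_zero[of n A, OF A]
    by (simp add: tup_right_inr)
  then have "tnorm n (tapply n B u) = tnorm n (tapply n (\<lambda>a b. block_diag (A a b) (B a b)) ?v)"
    by (simp add: tnorm_nonneg power2_eq_iff_nonneg)
  also have "\<dots> \<le> bop_mnorm n (\<lambda>a b. block_diag (A a b) (B a b))"
    using u by (intro bop_mnorm_upper block_diag_entries_bop tup_l2_inr) (simp_all add: tnorm_inr)
  finally show "tnorm n (tapply n B u) \<le> bop_mnorm n (\<lambda>a b. block_diag (A a b) (B a b))" .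
qed

lemma bop_mpos_block_diag_iff:
  "bop_mpos n (\<lambda>a b. block_diag (A a b) (B a b)) \<longleftrightarrow> bop_mpos n A \<and> bop_mpos n B"
proof
  assume pos: "bop_mpos n (\<lambda>a b. block_diag (A a b) (B a b))"
  have "bop_mpos n A"
    unfolding bop_mpos_def
  proof
    fix u :: "nat \<Rightarrow> 'h \<Rightarrow> complex" assume u: "u \<in> tup_l2 n"
    show "Im (tinner n (tapply n A u) u) = 0 \<and> 0 \<le> Re (tinner n (tapply n A u) u)"
      using bspec[OF pos[unfolded bop_mpos_def] tup_l2_inl[OF u]] by (simp add: tinner_tapply_block_diag_inl u)
  qed
  moreover have "bop_mpos n B"
    unfolding bop_mpos_def
  proof
    fix u :: "nat \<Rightarrow> 'k \<Rightarrow> complex" assume u: "u \<in> tup_l2 n"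
    show "Im (tinner n (tapply n B u) u) = 0 \<and> 0 \<le> Re (tinner n (tapply n B u) u)"
      using bspec[OF pos[unfolded bop_mpos_def] tup_l2_inr[OF u]] by (simp add: tinner_tapply_block_diag_inr u)
  qed
  ultimately show "bop_mpos n A \<and> bop_mpos n B" ..
next
  assume "bop_mpos n A \<and> bop_mpos n B"
  then have posA: "bop_mpos n A" and posB: "bop_mpos n B" by simp_all
  show "bop_mpos n (\<lambda>a b. block_diag (A a b) (B a b))"
    unfolding bop_mpos_def
  proof
    fix u :: "nat \<Rightarrow> 'h + 'k \<Rightarrow> complex" assume u: "u \<in> tup_l2 n"
    have lr: "tup_left u \<in> tup_l2 n" "tup_right u \<in> tup_l2 n" using tup_l2_left_right[OF u] by simp_all
    show "Im (tinner n (tapply n (\<lambda>a b. block_diag (A a b) (B a b)) u) u) = 0 \<and>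
        0 \<le> Re (tinner n (tapply n (\<lambda>a b. block_diag (A a b) (B a b)) u) u)"
      unfolding tinner_tapply_block_diag[OF u]
      using bspec[OF posA[unfolded bop_mpos_def] lr(1)] bspec[OF posB[unfolded bop_mpos_def] lr(2)]
      by simp
  qed
qed

end

locale dual_embedding =
  fixes S :: "('v::ab_group_add) mstruct" and \<Phi> :: "('v \<Rightarrow> complex) \<Rightarrow> ('h \<Rightarrow> complex) \<Rightarrow> ('h \<Rightarrow> complex)"
  assumes bop: "dual_mat S 1 (\<lambda>_ _. f) \<Longrightarrow> \<Phi> f \<in> bop"
    and add: "dual_mat S 1 (\<lambda>_ _. f) \<Longrightarrow> dual_mat S 1 (\<lambda>_ _. g) \<Longrightarrow>
      \<Phi> (\<lambda>x. f x + g x) = (\<lambda>u i. \<Phi> f u i + \<Phi> g u i)"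
    and scale: "dual_mat S 1 (\<lambda>_ _. f) \<Longrightarrow> \<Phi> (\<lambda>x. c * f x) = (\<lambda>u i. c * \<Phi> f u i)"
    and bounded: "\<exists>K. \<forall>n\<ge>1. \<forall>F. dual_mat S n F \<longrightarrow>
      bop_mnorm n (\<lambda>a b. \<Phi> (F a b)) \<le> K * dual_mnorm S n F"
    and bounded_below: "\<exists>c>0. \<forall>n\<ge>1. \<forall>F. dual_mat S n F \<longrightarrow>
      c * dual_mnorm S n F \<le> bop_mnorm n (\<lambda>a b. \<Phi> (F a b))"
    and mpos_iff: "n \<ge> 1 \<Longrightarrow> dual_mat S n F \<Longrightarrow> dual_mpos S n F \<longleftrightarrow> bop_mpos n (\<lambda>a b. \<Phi> (F a b))"

lemma dualizable_iff:
  "dualizable TYPE('h) S \<longleftrightarrow>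
     (\<exists>\<Phi> :: ('v::ab_group_add \<Rightarrow> complex) \<Rightarrow> ('h \<Rightarrow> complex) \<Rightarrow> ('h \<Rightarrow> complex). dual_embedding S \<Phi>)"
  unfolding dualizable_def dual_embedding_def conj_assoc by (intro ex_cong1 conj_cong) auto

lemma dual_embedding_bounded_nonneg:
  assumes "dual_embedding S \<Phi>" "os_embedding S j"
  obtains K where "K \<ge> 0"
    "\<And>n F. n \<ge> 1 \<Longrightarrow> dual_mat S n F \<Longrightarrow> bop_mnorm n (\<lambda>a b. \<Phi> (F a b)) \<le> K * dual_mnorm S n F"
proof -
  obtain K where K: "\<And>n F. n \<ge> 1 \<Longrightarrow> dual_mat S n F \<Longrightarrow> bop_mnorm n (\<lambda>a b. \<Phi> (F a b)) \<le> K * dual_mnorm S n F"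
    using dual_embedding.bounded[OF assms(1)] by blast
  have bound: "bop_mnorm n (\<lambda>a b. \<Phi> (F a b)) \<le> max K 0 * dual_mnorm S n F"
    if nF: "n \<ge> 1" "dual_mat S n F" for n F
  proof -
    have "bop_mnorm n (\<lambda>a b. \<Phi> (F a b)) \<le> K * dual_mnorm S n F" by (rule K[OF nF])
    also have "\<dots> \<le> max K 0 * dual_mnorm S n F"
      using os_embedding.dual_mnorm_nonneg[OF assms(2) nF(2)] by (intro mult_right_mono) simp_all
    finally show ?thesis .
  qed
  show ?thesis by (rule that[of "max K 0", OF _ bound]) simp_all
qed

definition coprod_dual_map ::
    "(('a \<Rightarrow> complex) \<Rightarrow> ('h \<Rightarrow> complex) \<Rightarrow> ('h \<Rightarrow> complex))
      \<Rightarrow> (('b \<Rightarrow> complex) \<Rightarrow> ('k \<Rightarrow> complex) \<Rightarrow> ('k \<Rightarrow> complex))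
      \<Rightarrow> ('a::zero \<times> 'b::zero \<Rightarrow> complex) \<Rightarrow> ('h + 'k \<Rightarrow> complex) \<Rightarrow> ('h + 'k \<Rightarrow> complex)" where
  "coprod_dual_map \<Phi>S \<Phi>T f = block_diag (\<Phi>S (\<lambda>x. f (x, 0))) (\<Phi>T (\<lambda>y. f (0, y)))"

lemma coprod_dual_map_entries:
  "(\<lambda>a b. coprod_dual_map \<Phi>S \<Phi>T (F a b)) = (\<lambda>a b. block_diag (\<Phi>S (dual_fst F a b)) (\<Phi>T (dual_snd F a b)))"
  by (simp add: coprod_dual_map_def dual_fst_def dual_snd_def)

context
  fixes S :: "('a::ab_group_add) mstruct" and T :: "('b::ab_group_add) mstruct"
    and jS :: "'a \<Rightarrow> ('i \<Rightarrow> complex) \<Rightarrow> ('i \<Rightarrow> complex)"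
    and jT :: "'b \<Rightarrow> ('j \<Rightarrow> complex) \<Rightarrow> ('j \<Rightarrow> complex)"
    and \<Phi>S :: "('a \<Rightarrow> complex) \<Rightarrow> ('h \<Rightarrow> complex) \<Rightarrow> ('h \<Rightarrow> complex)"
    and \<Phi>T :: "('b \<Rightarrow> complex) \<Rightarrow> ('k \<Rightarrow> complex) \<Rightarrow> ('k \<Rightarrow> complex)"
  assumes jS: "os_embedding S jS" and jT: "os_embedding T jT"
    and \<Phi>S: "dual_embedding S \<Phi>S" and \<Phi>T: "dual_embedding T \<Phi>T"
begin

lemma dual_fst_entry_bop:
  "dual_mat (coprod S T) n F \<Longrightarrow> a < n \<Longrightarrow> b < n \<Longrightarrow> \<Phi>S (dual_fst F a b) \<in> bop"
  by (intro dual_embedding.bop[OF \<Phi>S] dual_mat_entry dual_mat_fst[OF jS jT])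

lemma dual_snd_entry_bop:
  "dual_mat (coprod S T) n F \<Longrightarrow> a < n \<Longrightarrow> b < n \<Longrightarrow> \<Phi>T (dual_snd F a b) \<in> bop"
  by (intro dual_embedding.bop[OF \<Phi>T] dual_mat_entry dual_mat_snd[OF jS jT])

lemma coprod_dual_map_bounded:
  obtains K where "\<And>n F. n \<ge> 1 \<Longrightarrow> dual_mat (coprod S T) n F \<Longrightarrow>
    bop_mnorm n (\<lambda>a b. coprod_dual_map \<Phi>S \<Phi>T (F a b)) \<le> K * dual_mnorm (coprod S T) n F"
proof -
  obtain KS where KS: "KS \<ge> 0"
    "\<And>n F. n \<ge> 1 \<Longrightarrow> dual_mat S n F \<Longrightarrow> bop_mnorm n (\<lambda>a b. \<Phi>S (F a b)) \<le> KS * dual_mnorm S n F"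
    by (rule dual_embedding_bounded_nonneg[OF \<Phi>S jS]) blast
  obtain KT where KT: "KT \<ge> 0"
    "\<And>n F. n \<ge> 1 \<Longrightarrow> dual_mat T n F \<Longrightarrow> bop_mnorm n (\<lambda>a b. \<Phi>T (F a b)) \<le> KT * dual_mnorm T n F"
    by (rule dual_embedding_bounded_nonneg[OF \<Phi>T jT]) blast
  have "bop_mnorm n (\<lambda>a b. coprod_dual_map \<Phi>S \<Phi>T (F a b)) \<le> (KS + KT) * dual_mnorm (coprod S T) n F"
    if n: "n \<ge> 1" and F: "dual_mat (coprod S T) n F" for n F
  proof -
    have "bop_mnorm n (\<lambda>a b. coprod_dual_map \<Phi>S \<Phi>T (F a b))
        \<le> bop_mnorm n (\<lambda>a b. \<Phi>S (dual_fst F a b)) + bop_mnorm n (\<lambda>a b. \<Phi>T (dual_snd F a b))"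
      unfolding coprod_dual_map_entries
      by (rule bop_mnorm_block_diag_le) (simp_all add: dual_fst_entry_bop[OF F] dual_snd_entry_bop[OF F])
    also have "\<dots> \<le> KS * dual_mnorm S n (dual_fst F) + KT * dual_mnorm T n (dual_snd F)"
      by (intro add_mono KS(2) KT(2) n dual_mat_fst[OF jS jT F] dual_mat_snd[OF jS jT F])
    also have "\<dots> \<le> KS * dual_mnorm (coprod S T) n F + KT * dual_mnorm (coprod S T) n F"
      by (intro add_mono mult_left_mono KS(1) KT(1) dual_mnorm_fst_le[OF jS jT F] dual_mnorm_snd_le[OF jS jT F])
    finally show ?thesis by (simp add: distrib_right)
  qed
  then show ?thesis by (rule that)
qed

lemma coprod_dual_map_bounded_below:
  obtains c where "c > 0" "\<And>n F. n \<ge> 1 \<Longrightarrow> dual_mat (coprod S T) n F \<Longrightarrow>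
    c * dual_mnorm (coprod S T) n F \<le> bop_mnorm n (\<lambda>a b. coprod_dual_map \<Phi>S \<Phi>T (F a b))"
proof -
  obtain cS where cS: "cS > 0"
    "\<And>n F. n \<ge> 1 \<Longrightarrow> dual_mat S n F \<Longrightarrow> cS * dual_mnorm S n F \<le> bop_mnorm n (\<lambda>a b. \<Phi>S (F a b))"
    using dual_embedding.bounded_below[OF \<Phi>S] by blast
  obtain cT where cT: "cT > 0"
    "\<And>n F. n \<ge> 1 \<Longrightarrow> dual_mat T n F \<Longrightarrow> cT * dual_mnorm T n F \<le> bop_mnorm n (\<lambda>a b. \<Phi>T (F a b))"
    using dual_embedding.bounded_below[OF \<Phi>T] by blast
  define c where "c = min cS cT / 2"
  have "c > 0" using cS(1) cT(1) by (simp add: c_def)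
  moreover have "c * dual_mnorm (coprod S T) n F \<le> bop_mnorm n (\<lambda>a b. coprod_dual_map \<Phi>S \<Phi>T (F a b))"
    if n: "n \<ge> 1" and F: "dual_mat (coprod S T) n F" for n F
  proof -
    let ?B = "bop_mnorm n (\<lambda>a b. coprod_dual_map \<Phi>S \<Phi>T (F a b))"
    have FS: "dual_mat S n (dual_fst F)" and FT: "dual_mat T n (dual_snd F)"
      using dual_mat_fst[OF jS jT F] dual_mat_snd[OF jS jT F] .
    have "c * dual_mnorm S n (dual_fst F) \<le> cS / 2 * dual_mnorm S n (dual_fst F)"
      unfolding c_def by (intro mult_right_mono os_embedding.dual_mnorm_nonneg[OF jS FS]) simp
    also have "\<dots> \<le> bop_mnorm n (\<lambda>a b. \<Phi>S (dual_fst F a b)) / 2" using cS(2)[OF n FS] by simp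
    also have "\<dots> \<le> ?B / 2"
      using bop_mnorm_le_block_diag_left[of n "\<lambda>a b. \<Phi>S (dual_fst F a b)" "\<lambda>a b. \<Phi>T (dual_snd F a b)"]
        dual_fst_entry_bop[OF F] dual_snd_entry_bop[OF F]
      by (simp add: coprod_dual_map_entries)
    finally have S: "c * dual_mnorm S n (dual_fst F) \<le> ?B / 2" .
    have "c * dual_mnorm T n (dual_snd F) \<le> cT / 2 * dual_mnorm T n (dual_snd F)"
      unfolding c_def by (intro mult_right_mono os_embedding.dual_mnorm_nonneg[OF jT FT]) simp
    also have "\<dots> \<le> bop_mnorm n (\<lambda>a b. \<Phi>T (dual_snd F a b)) / 2" using cT(2)[OF n FT] by simp
    also have "\<dots> \<le> ?B / 2"
      using bop_mnorm_le_block_diag_right[of n "\<lambda>a b. \<Phi>S (dual_fst F a b)" "\<lambda>a b. \<Phi>T (dual_snd F a b)"]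
        dual_fst_entry_bop[OF F] dual_snd_entry_bop[OF F]
      by (simp add: coprod_dual_map_entries)
    finally have T: "c * dual_mnorm T n (dual_snd F) \<le> ?B / 2" .
    have "c * dual_mnorm (coprod S T) n F \<le> c * (dual_mnorm S n (dual_fst F) + dual_mnorm T n (dual_snd F))"
      using cS(1) cT(1) unfolding c_def by (intro mult_left_mono dual_mnorm_coprod_le[OF jS jT F n]) simp
    with S T show ?thesis by (simp add: distrib_left)
  qed
  ultimately show ?thesis by (rule that)
qed

lemma coprod_dual_map_mpos_iff:
  assumes n: "n \<ge> 1" and F: "dual_mat (coprod S T) n F"
  shows "dual_mpos (coprod S T) n F \<longleftrightarrow> bop_mpos n (\<lambda>a b. coprod_dual_map \<Phi>S \<Phi>T (F a b))"
  unfolding dual_mpos_coprod_iff[OF jS jT F n] coprod_dual_map_entries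
    dual_embedding.mpos_iff[OF \<Phi>S n dual_mat_fst[OF jS jT F]]
    dual_embedding.mpos_iff[OF \<Phi>T n dual_mat_snd[OF jS jT F]]
  by (rule bop_mpos_block_diag_iff[symmetric]) (simp_all add: dual_fst_entry_bop[OF F] dual_snd_entry_bop[OF F])

lemma dual_embedding_coprod: "dual_embedding (coprod S T) (coprod_dual_map \<Phi>S \<Phi>T)"
proof
  fix f assume f: "dual_mat (coprod S T) 1 (\<lambda>_ _. f)"
  then show "coprod_dual_map \<Phi>S \<Phi>T f \<in> bop"
    using dual_fst_entry_bop[OF f] dual_snd_entry_bop[OF f]
    by (simp add: coprod_dual_map_def dual_fst_def dual_snd_def block_diag_bop)
  fix c
  have "dual_mat S 1 (\<lambda>_ _ x. f (x, 0))" "dual_mat T 1 (\<lambda>_ _ y. f (0, y))"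
    using dual_mat_fst[OF jS jT f] dual_mat_snd[OF jS jT f] by (simp_all add: dual_fst_def dual_snd_def)
  then show "coprod_dual_map \<Phi>S \<Phi>T (\<lambda>x. c * f x) = (\<lambda>u i. c * coprod_dual_map \<Phi>S \<Phi>T f u i)"
    by (simp add: coprod_dual_map_def dual_embedding.scale[OF \<Phi>S] dual_embedding.scale[OF \<Phi>T] block_diag_scale)
next
  fix f g assume f: "dual_mat (coprod S T) 1 (\<lambda>_ _. f)" and g: "dual_mat (coprod S T) 1 (\<lambda>_ _. g)"
  have "dual_mat S 1 (\<lambda>_ _ x. f (x, 0))" "dual_mat T 1 (\<lambda>_ _ y. f (0, y))"
    "dual_mat S 1 (\<lambda>_ _ x. g (x, 0))" "dual_mat T 1 (\<lambda>_ _ y. g (0, y))"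
    using dual_mat_fst[OF jS jT f] dual_mat_snd[OF jS jT f] dual_mat_fst[OF jS jT g] dual_mat_snd[OF jS jT g]
    by (simp_all add: dual_fst_def dual_snd_def)
  then show "coprod_dual_map \<Phi>S \<Phi>T (\<lambda>x. f x + g x) = (\<lambda>u i. coprod_dual_map \<Phi>S \<Phi>T f u i + coprod_dual_map \<Phi>S \<Phi>T g u i)"
    by (simp add: coprod_dual_map_def dual_embedding.add[OF \<Phi>S] dual_embedding.add[OF \<Phi>T] block_diag_add)
next
  obtain K where "\<And>n F. n \<ge> 1 \<Longrightarrow> dual_mat (coprod S T) n F \<Longrightarrow>
      bop_mnorm n (\<lambda>a b. coprod_dual_map \<Phi>S \<Phi>T (F a b)) \<le> K * dual_mnorm (coprod S T) n F"
    by (rule coprod_dual_map_bounded) blast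
  then show "\<exists>K. \<forall>n\<ge>1. \<forall>F. dual_mat (coprod S T) n F \<longrightarrow>
      bop_mnorm n (\<lambda>a b. coprod_dual_map \<Phi>S \<Phi>T (F a b)) \<le> K * dual_mnorm (coprod S T) n F"
    by blast
next
  obtain c where "c > 0" "\<And>n F. n \<ge> 1 \<Longrightarrow> dual_mat (coprod S T) n F \<Longrightarrow>
      c * dual_mnorm (coprod S T) n F \<le> bop_mnorm n (\<lambda>a b. coprod_dual_map \<Phi>S \<Phi>T (F a b))"
    by (rule coprod_dual_map_bounded_below) blast
  then show "\<exists>c>0. \<forall>n\<ge>1. \<forall>F. dual_mat (coprod S T) n F \<longrightarrow>
      c * dual_mnorm (coprod S T) n F \<le> bop_mnorm n (\<lambda>a b. coprod_dual_map \<Phi>S \<Phi>T (F a b))"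
    by blast
qed (rule coprod_dual_map_mpos_iff)

end

theorem proposition9p5:
  fixes S :: "('a::ab_group_add) mstruct" and T :: "('b::ab_group_add) mstruct"
  assumes "operator_system TYPE('i) S"
    and "operator_system TYPE('j) T"
    and "dualizable TYPE('h) S"
    and "dualizable TYPE('k) T"
  shows "dualizable TYPE('h + 'k) (coprod S T)"
proof -
  obtain jS :: "'a \<Rightarrow> ('i \<Rightarrow> complex) \<Rightarrow> ('i \<Rightarrow> complex)" where jS: "os_embedding S jS"
    using assms(1) by (rule operator_system_os_embedding)
  obtain jT :: "'b \<Rightarrow> ('j \<Rightarrow> complex) \<Rightarrow> ('j \<Rightarrow> complex)" where jT: "os_embedding T jT"
    using assms(2) by (rule operator_system_os_embedding)
  obtain \<Phi>S :: "('a \<Rightarrow> complex) \<Rightarrow> ('h \<Rightarrow> complex) \<Rightarrow> ('h \<Rightarrow> complex)" where \<Phi>S: "dual_embedding S \<Phi>S"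
    using assms(3) unfolding dualizable_iff by blast
  obtain \<Phi>T :: "('b \<Rightarrow> complex) \<Rightarrow> ('k \<Rightarrow> complex) \<Rightarrow> ('k \<Rightarrow> complex)" where \<Phi>T: "dual_embedding T \<Phi>T"
    using assms(4) unfolding dualizable_iff by blast
  show ?thesis
    unfolding dualizable_iff using dual_embedding_coprod[OF jS jT \<Phi>S \<Phi>T] by blast
qed

end
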